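(* In $\mathbb{C}\mathbb{P}^2$ with homogeneous coordinates $[x:y:z]$ let $\mathcal{A}$ be the arrangement of the lines $L_1: 2y-z=0$, $L_2: x-y=0$, $L_3: x+y-z=0$, $L_4: x=0$, $L_5: 2x-2y+z=0$, $L_6: x-z=0$, $L_7: 2x+6y-5z=0$, $L_8: y=0$, $L_9: y-z=0$, $L_{10}: z=0$, and consider $L^1_{11}: 3x+2y-3z=0$, $L^1_{12}: 5y-3z=0$, $L^1_{13}: 6x-2y-3z=0$, $L^2_{11}: x-3y-z=0$, $L^2_{12}: 2y+z=0$, $L^2_{13}: 4x+6y-13z=0$. Then $\mathcal{A}\cup\{L^1_{11},L^1_{12},L^1_{13}\}$ and $\mathcal{A}\cup\{L^2_{11},L^2_{12},L^2_{13}\}$ form a rational pair.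
   Context: A line arrangement is a finite set of distinct lines in $\mathbb{C}\mathbb{P}^2$. Its combinatorics is the pair $(\mathcal{A},\mathrm{sing}(\mathcal{A}))$ where each singular point is identified with the set of lines through it. Two arrangements are lattice isomorphic if some bijection between their lines induces a bijection between their sets of singular points. The moduli space $\mathcal{M}(\mathcal{C})$ of a combinatorics $\mathcal{C}$ is the set of arrangements with combinatorics $\mathcal{C}$ modulo $\mathrm{PGL}_3(\mathbb{C})$. A pair of arrangements means two lattice isomorphic arrangements lying in different connected components of their common moduli space. The definition field $\mathbb{F}(\mathcal{A})$ is the number field generated by the coefficients of the lines of $\mathcal{A}$. A pair is rational if both arrangements have definition field $\mathbb{Q}$. *)

theory Defs
  imports "HOL-Analysis.Analysis"
begin

text \<open>Points of CP^2 are represented by nonzero vectors of complex^3.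
  A line of CP^2 is represented by the set of (homogeneous) vectors p with
  a1 p1 + a2 p2 + a3 p3 = 0 for a nonzero coefficient vector a.\<close>

type_synonym cvec = "complex^3"

definition line_of :: "cvec \<Rightarrow> cvec set" where
  "line_of a = {p. (\<Sum>i\<in>UNIV. a$i * p$i) = 0}"

definition is_line :: "cvec set \<Rightarrow> bool" where
  "is_line L \<longleftrightarrow> (\<exists>a. a \<noteq> 0 \<and> L = line_of a)"

definition arrangement :: "cvec set set \<Rightarrow> bool" where
  "arrangement A \<longleftrightarrow> finite A \<and> (\<forall>L\<in>A. is_line L)"

text \<open>Singular points, each identified with the set of lines through it.\<close>
definition sing :: "cvec set set \<Rightarrow> cvec set set set" where
  "sing A = {{L\<in>A. p \<in> L} | p. p \<noteq> 0 \<and> card {L\<in>A. p \<in> L} \<ge> 2}"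

definition lattice_iso :: "cvec set set \<Rightarrow> cvec set set \<Rightarrow> bool" where
  "lattice_iso A B \<longleftrightarrow>
     (\<exists>\<sigma>. bij_betw \<sigma> A B \<and> bij_betw (\<lambda>S. \<sigma> ` S) (sing A) (sing B))"

definition pgl_orbit :: "cvec set set \<Rightarrow> cvec set set set" where
  "pgl_orbit B = {(\<lambda>L. (\<lambda>p. g *v p) ` L) ` B | g :: complex^3^3. invertible g}"

definition arr_of :: "(cvec^'n::finite) \<Rightarrow> cvec set set" where
  "arr_of l = range (\<lambda>i. line_of (l$i))"

definition realizations :: "'n::finite itself \<Rightarrow> cvec set set \<Rightarrow> (cvec^'n) set" where
  "realizations T A0 = {l :: cvec^'n. (\<forall>i. l$i \<noteq> 0) \<and> inj (\<lambda>i. line_of (l$i))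
                                      \<and> lattice_iso A0 (arr_of l)}"

text \<open>Moduli space of the combinatorics of A0: arrangements lattice isomorphic to A0 modulo
  PGL_3(C), with the quotient topology coming from the space of ordered realizations.\<close>
definition moduli_top :: "'n::finite itself \<Rightarrow> cvec set set \<Rightarrow> cvec set set set topology" where
  "moduli_top T A0 = topology (\<lambda>U.
      U \<subseteq> (\<lambda>l. pgl_orbit (arr_of l)) ` realizations T A0 \<and>
      openin (top_of_set (realizations T A0))
             {l \<in> realizations T A0. pgl_orbit (arr_of l) \<in> U})"

text \<open>Definition field equal to Q: every line has a rational coefficient vector
  (equivalently, the normalized coefficients generate Q).\<close>
definition rational_arr :: "cvec set set \<Rightarrow> bool" where
  "rational_arr A \<longleftrightarrow>
     (\<forall>L\<in>A. \<exists>a. a \<noteq> 0 \<and> (\<forall>i. a$i \<in> \<rat>) \<and> L = line_of a)"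

text \<open>A pair: lattice isomorphic arrangements in different connected components of the
  common moduli space. The type 'n indexes the lines and must have card A elements.\<close>
definition is_pair :: "'n::finite itself \<Rightarrow> cvec set set \<Rightarrow> cvec set set \<Rightarrow> bool" where
  "is_pair T A B \<longleftrightarrow> arrangement A \<and> arrangement B \<and> CARD('n) = card A \<and>
     lattice_iso A B \<and>
     \<not> connected_component_of (moduli_top T A) (pgl_orbit A) (pgl_orbit B)"

definition rational_pair :: "'n::finite itself \<Rightarrow> cvec set set \<Rightarrow> cvec set set \<Rightarrow> bool" where
  "rational_pair T A B \<longleftrightarrow> is_pair T A B \<and> rational_arr A \<and> rational_arr B"

definition lin :: "complex \<Rightarrow> complex \<Rightarrow> complex \<Rightarrow> cvec set" where
  "lin a b c = line_of (vector [a, b, c])"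

end

theory Submission
  imports Defs
begin

(* Move L4, L8, L10 and L3 by a projective transformation to x = 0, y = 0, z = 0 and
   x + y - z = 0. The incidences of L1, ..., L10 then fix these ten lines, and those of L11, L12
   and L13 force L12 to be by + cz = 0 with (3b + 5c)(b - 2c) = 0. Up to nonzero factors the two
   factors are the bracket polynomials Q1 and Q2 below, which are relative invariants of the
   projective group, so on every realization exactly one of them vanishes.
   The combinatorics has no nontrivial automorphism, hence the lines of a realization carry a
   unique labelling, and "Q1 vanishes" is a well-defined condition on the realization space that
   is closed, invariant under the projective group, and has the closed complement "Q2 vanishes".
   Its image is therefore clopen in the moduli space; it contains the first arrangement (Q1 = 0)
   but not the second (Q2 = 0). *)

section \<open>Lines and brackets in the complex projective plane\<close>

definition cdot :: "cvec \<Rightarrow> cvec \<Rightarrow> complex" where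
  "cdot a p = a$1 * p$1 + a$2 * p$2 + a$3 * p$3"

definition ccross :: "cvec \<Rightarrow> cvec \<Rightarrow> cvec" where
  "ccross a b = vector [a$2 * b$3 - a$3 * b$2, a$3 * b$1 - a$1 * b$3, a$1 * b$2 - a$2 * b$1]"

definition bracket :: "cvec \<Rightarrow> cvec \<Rightarrow> cvec \<Rightarrow> complex" where
  "bracket a b c = det (vector [a, b, c] :: complex^3^3)"

lemma line_of_cdot: "line_of a = {p. cdot a p = 0}"
  by (simp add: line_of_def cdot_def sum_3)

lemma vec3_eq_iff: "(x::cvec) = y \<longleftrightarrow> x$1 = y$1 \<and> x$2 = y$2 \<and> x$3 = y$3"
  by (simp add: vec_eq_iff forall_3)

lemma vec3_eq_0_iff: "(x::cvec) = 0 \<longleftrightarrow> x$1 = 0 \<and> x$2 = 0 \<and> x$3 = 0"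
  by (simp add: vec_eq_iff forall_3)

lemma ccross_nth:
  "ccross a b $ 1 = a$2 * b$3 - a$3 * b$2"
  "ccross a b $ 2 = a$3 * b$1 - a$1 * b$3"
  "ccross a b $ 3 = a$1 * b$2 - a$2 * b$1"
  by (simp_all add: ccross_def)

lemma bracket_expand:
  "bracket a b c = a$1 * (b$2 * c$3 - b$3 * c$2) - a$2 * (b$1 * c$3 - b$3 * c$1)
                 + a$3 * (b$1 * c$2 - b$2 * c$1)"
  unfolding bracket_def by (simp add: det_3 algebra_simps)

lemma cdot_ccross: "cdot c (ccross a b) = bracket a b c"
  by (simp add: cdot_def ccross_def bracket_expand algebra_simps)

lemma ccross_cdot: "cdot (ccross a b) c = bracket a b c"
  by (simp add: cdot_def ccross_def bracket_expand algebra_simps)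

lemma bracket_same: "bracket a a c = 0" "bracket a b a = 0" "bracket a b b = 0"
  by (simp_all add: bracket_expand algebra_simps)

lemma bracket_scale: "bracket (x *s a) (y *s b) (z *s c) = x * y * z * bracket a b c"
  by (simp add: bracket_expand algebra_simps)

lemma bracket_matrix_vector_mult: "bracket (M *v a) (M *v b) (M *v c) = det M * bracket a b c"
proof -
  have "(vector [a, b, c] :: complex^3^3) ** transpose M = vector [M *v a, M *v b, M *v c]"
    by (simp add: vec_eq_iff forall_3 matrix_matrix_mult_def matrix_vector_mult_def
        transpose_def sum_3 algebra_simps)
  then have "bracket (M *v a) (M *v b) (M *v c) = det ((vector [a, b, c] :: complex^3^3) ** transpose M)"
    by (simp add: bracket_def)
  also have "\<dots> = bracket a b c * det M"
    by (simp add: det_mul det_transpose bracket_def)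
  finally show ?thesis
    by simp
qed

lemma cdot_scale_left: "cdot (c *s a) p = c * cdot a p"
  by (simp add: cdot_def algebra_simps)

lemma cdot_scale_right: "cdot a (c *s p) = c * cdot a p"
  by (simp add: cdot_def algebra_simps)

lemma cdot_matrix_vector_mult: "cdot (M *v a) b = cdot a (transpose M *v b)"
  by (simp add: cdot_def matrix_vector_mult_def transpose_def sum_3 algebra_simps)

lemma matrix_vector_mult_neq_0:
  fixes M :: "'a::field^'n^'n"
  assumes "det M \<noteq> 0" "x \<noteq> 0"
  shows "M *v x \<noteq> 0"
proof
  assume "M *v x = 0"
  obtain B where "B ** M = mat 1"
    using assms(1) invertible_det_nz invertible_left_inverse by blast
  then have "x = B *v (M *v x)"
    by (simp add: matrix_vector_mul_assoc)
  with \<open>M *v x = 0\<close> assms(2) show False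
    by simp
qed

lemma ccross_eq_0_if_line_of_subset:
  assumes "line_of a \<subseteq> line_of b"
  shows "ccross a b = 0"
proof -
  have "cdot b (ccross a e) = 0" for e
  proof -
    have "ccross a e \<in> line_of a"
      by (simp add: line_of_cdot cdot_ccross bracket_same)
    with assms show ?thesis
      by (auto simp: line_of_cdot)
  qed
  from this[of "vector [1, 0, 0]"] this[of "vector [0, 1, 0]"] this[of "vector [0, 0, 1]"]
  show ?thesis
    by (simp add: vec3_eq_0_iff cdot_def ccross_nth algebra_simps)
qed

lemma ccross_eq_0_imp_proportional:
  assumes "ccross a b = 0" "a \<noteq> 0"
  shows "\<exists>c. b = c *s a"
proof -
  have e: "a$2 * b$3 = a$3 * b$2" "a$3 * b$1 = a$1 * b$3" "a$1 * b$2 = a$2 * b$1"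
    using assms(1) by (simp_all add: vec3_eq_0_iff ccross_nth)
  consider "a$1 \<noteq> 0" | "a$2 \<noteq> 0" | "a$3 \<noteq> 0"
    using assms(2) by (auto simp: vec3_eq_0_iff)
  then show ?thesis
  proof cases
    case 1
    with e have "b = (b$1 / a$1) *s a"
      by (auto simp: vec3_eq_iff field_simps mult.commute)
    then show ?thesis ..
  next
    case 2
    with e have "b = (b$2 / a$2) *s a"
      by (auto simp: vec3_eq_iff field_simps mult.commute)
    then show ?thesis ..
  next
    case 3
    with e have "b = (b$3 / a$3) *s a"
      by (auto simp: vec3_eq_iff field_simps mult.commute)
    then show ?thesis ..
  qed
qed

lemma line_of_scale: "c \<noteq> 0 \<Longrightarrow> line_of (c *s a) = line_of a"
  by (simp add: line_of_cdot cdot_scale_left)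

lemma line_of_eq_iff_ccross_eq_0:
  assumes "a \<noteq> 0" "b \<noteq> 0"
  shows "line_of a = line_of b \<longleftrightarrow> ccross a b = 0"
proof
  assume "ccross a b = 0"
  then obtain c where c: "b = c *s a"
    using ccross_eq_0_imp_proportional assms(1) by blast
  with assms(2) have "c \<noteq> 0"
    by auto
  with c show "line_of a = line_of b"
    by (simp add: line_of_scale)
qed (simp add: ccross_eq_0_if_line_of_subset)

lemma line_of_eq_imp_proportional:
  assumes "line_of a = line_of b" "a \<noteq> 0" "b \<noteq> 0"
  shows "\<exists>c. c \<noteq> 0 \<and> b = c *s a"
proof -
  obtain c where "b = c *s a"
    using assms line_of_eq_iff_ccross_eq_0 ccross_eq_0_imp_proportional by blast
  with assms(3) show ?thesis
    by auto
qed

lemma point_of_two_lines: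
  assumes "cdot a p = 0" "cdot b p = 0" "ccross a b \<noteq> 0" "p \<noteq> 0"
  shows "\<exists>l. l \<noteq> 0 \<and> p = l *s ccross a b"
proof -
  have "ccross (ccross a b) p = cdot a p *s b - cdot b p *s a"
    by (simp add: vec3_eq_iff ccross_nth cdot_def algebra_simps)
  with assms(1,2) have "ccross (ccross a b) p = 0"
    by simp
  then obtain l where "p = l *s ccross a b"
    using ccross_eq_0_imp_proportional assms(3) by blast
  with assms(4) show ?thesis
    by auto
qed

lemma image_line_of_matrix:
  assumes "B ** g = mat 1" "g ** B = mat 1"
  shows "(\<lambda>p. g *v p) ` line_of a = line_of (transpose B *v a)"
proof
  have cdot_g: "cdot (transpose B *v a) (g *v p) = cdot a p" for p
    by (simp only: cdot_matrix_vector_mult transpose_transpose matrix_vector_mul_assoc assms(1)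
        matrix_vector_mul_lid)
  then show "(\<lambda>p. g *v p) ` line_of a \<subseteq> line_of (transpose B *v a)"
    by (auto simp: line_of_cdot)
  show "line_of (transpose B *v a) \<subseteq> (\<lambda>p. g *v p) ` line_of a"
  proof
    fix q
    assume "q \<in> line_of (transpose B *v a)"
    moreover have "g *v (B *v q) = q"
      by (simp add: matrix_vector_mul_assoc assms(2))
    ultimately have "B *v q \<in> line_of a" "q = g *v (B *v q)"
      using cdot_g[of "B *v q"] by (simp_all add: line_of_cdot)
    then show "q \<in> (\<lambda>p. g *v p) ` line_of a"
      by blast
  qed
qed

text \<open>The target lines x = 0, y = 0, z = 0 and x + y - z = 0 are L4, L8, L10 and L3.\<close>
lemma projective_frame:
  assumes "bracket a b c \<noteq> 0" "bracket b c d \<noteq> 0" "bracket c a d \<noteq> 0" "bracket a b d \<noteq> 0"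
  obtains M :: "complex^3^3"
  where "det M \<noteq> 0" "(M *v a)$2 = 0" "(M *v a)$3 = 0" "(M *v b)$1 = 0" "(M *v b)$3 = 0"
    "(M *v c)$1 = 0" "(M *v c)$2 = 0" "M *v d = vector [1, 1, -1]"
proof -
  define \<alpha> \<beta> \<gamma> where "\<alpha> = bracket b c d" and "\<beta> = bracket c a d" and "\<gamma> = bracket a b d"
  define M where "M = (vector [(1/\<alpha>) *s ccross b c, (1/\<beta>) *s ccross c a,
                              (-1/\<gamma>) *s ccross a b] :: complex^3^3)"
  have M_nth: "(M *v x)$1 = bracket b c x / \<alpha>" "(M *v x)$2 = bracket c a x / \<beta>"
    "(M *v x)$3 = - bracket a b x / \<gamma>" for x
    by (simp_all add: M_def matrix_vector_mult_def sum_3 ccross_cdot[symmetric] cdot_def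
        add_divide_distrib diff_divide_distrib algebra_simps)
  have "det M = (1/\<alpha>) * (1/\<beta>) * (-1/\<gamma>)
                * det (vector [ccross b c, ccross c a, ccross a b] :: complex^3^3)"
    by (simp add: M_def det_3 algebra_simps)
  also have "det (vector [ccross b c, ccross c a, ccross a b] :: complex^3^3) = bracket a b c ^ 2"
    by (simp add: det_3 ccross_nth bracket_expand power2_eq_square algebra_simps)
  finally have "det M = (1/\<alpha>) * (1/\<beta>) * (-1/\<gamma>) * bracket a b c ^ 2" .
  with assms have "det M \<noteq> 0"
    by (simp add: \<alpha>_def \<beta>_def \<gamma>_def)
  moreover have "M *v d = vector [1, 1, -1]"
    using assms by (simp add: vec3_eq_iff M_nth \<alpha>_def \<beta>_def \<gamma>_def)
  ultimately show ?thesis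
    using that by (simp add: M_nth bracket_same)
qed

section \<open>Singular points and concurrent triples\<close>

locale labelled_arrangement =
  fixes v :: "'i \<Rightarrow> cvec" and I :: "'i set"
  assumes finite_index: "finite I"
    and nonzero: "\<And>k. k \<in> I \<Longrightarrow> v k \<noteq> 0"
    and inj_lines: "inj_on (\<lambda>k. line_of (v k)) I"
begin

abbreviation lines :: "cvec set set" where
  "lines \<equiv> (\<lambda>k. line_of (v k)) ` I"

definition through_meet :: "'i \<Rightarrow> 'i \<Rightarrow> cvec set set" where
  "through_meet c d = (\<lambda>m. line_of (v m)) ` {m \<in> I. bracket (v c) (v d) (v m) = 0}"

lemma ccross_neq_0:
  assumes "c \<in> I" "d \<in> I" "c \<noteq> d"
  shows "ccross (v c) (v d) \<noteq> 0"
proof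
  assume "ccross (v c) (v d) = 0"
  with assms nonzero have "line_of (v c) = line_of (v d)"
    by (simp add: line_of_eq_iff_ccross_eq_0)
  with assms inj_onD[OF inj_lines] show False
    by blast
qed

lemma mem_through_meet_iff:
  "k \<in> I \<Longrightarrow> line_of (v k) \<in> through_meet c d \<longleftrightarrow> bracket (v c) (v d) (v k) = 0"
  unfolding through_meet_def using inj_lines by (auto dest: inj_onD)

lemma through_meet_subset: "through_meet c d \<subseteq> lines"
  by (auto simp: through_meet_def)

lemma lines_through_point_eq_through_meet:
  assumes "c \<in> I" "d \<in> I" "c \<noteq> d" "p \<noteq> 0" "p \<in> line_of (v c)" "p \<in> line_of (v d)"
  shows "{L \<in> lines. p \<in> L} = through_meet c d"
proof -
  obtain l where "l \<noteq> 0" "p = l *s ccross (v c) (v d)"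
    using point_of_two_lines[of "v c" p "v d"] assms ccross_neq_0 by (auto simp: line_of_cdot)
  then have "p \<in> line_of (v m) \<longleftrightarrow> bracket (v c) (v d) (v m) = 0" for m
    by (simp add: line_of_cdot cdot_scale_right cdot_ccross)
  then show ?thesis
    by (auto simp: through_meet_def)
qed

lemma through_meet_in_sing:
  assumes "c \<in> I" "d \<in> I" "c \<noteq> d"
  shows "through_meet c d \<in> sing lines"
proof -
  let ?p = "ccross (v c) (v d)"
  have "?p \<noteq> 0"
    using ccross_neq_0 assms by auto
  moreover have "?p \<in> line_of (v c)" "?p \<in> line_of (v d)"
    by (simp_all add: line_of_cdot cdot_ccross bracket_same)
  ultimately have p: "{L \<in> lines. ?p \<in> L} = through_meet c d"
    using lines_through_point_eq_through_meet[OF assms] by blast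
  have "line_of (v c) \<noteq> line_of (v d)"
    using inj_onD[OF inj_lines _ assms(1,2)] assms(3) by blast
  then have "card {line_of (v c), line_of (v d)} = 2"
    by simp
  moreover have "{line_of (v c), line_of (v d)} \<subseteq> through_meet c d"
    using assms by (auto simp: through_meet_def bracket_same)
  then have "card {line_of (v c), line_of (v d)} \<le> card (through_meet c d)"
    using finite_index by (intro card_mono) (simp_all add: through_meet_def)
  ultimately have "card (through_meet c d) \<ge> 2"
    by simp
  with p \<open>?p \<noteq> 0\<close>
  have "through_meet c d = {L \<in> lines. ?p \<in> L} \<and> ?p \<noteq> 0 \<and> card {L \<in> lines. ?p \<in> L} \<ge> 2"
    by simp
  then show ?thesis
    unfolding sing_def mem_Collect_eq by (rule exI)
qed

lemma sing_eq_through_meet: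
  assumes "T \<in> sing lines" "c \<in> I" "d \<in> I" "c \<noteq> d" "line_of (v c) \<in> T" "line_of (v d) \<in> T"
  shows "T = through_meet c d"
proof -
  obtain p where p: "p \<noteq> 0" "T = {L \<in> lines. p \<in> L}"
    using assms(1) by (auto simp: sing_def)
  with assms(5,6) have "p \<in> line_of (v c)" "p \<in> line_of (v d)"
    by auto
  with lines_through_point_eq_through_meet[OF assms(2-4) p(1)] p(2) show ?thesis
    by simp
qed

lemma sing_obtain_through_meet:
  assumes "T \<in> sing lines"
  obtains c d where "c \<in> I" "d \<in> I" "c \<noteq> d" "T = through_meet c d"
proof -
  obtain p where p: "T = {L \<in> lines. p \<in> L}" "card T \<ge> 2"
    using assms by (auto simp: sing_def)
  then obtain L1 L2 where "L1 \<in> T" "L2 \<in> T" "L1 \<noteq> L2"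
    by (metis card_2_iff' card_le_Suc0_iff_eq not_less_eq_eq numeral_2_eq_2 card.infinite
        le_0_eq zero_neq_numeral)
  moreover obtain c d where "c \<in> I" "d \<in> I" "L1 = line_of (v c)" "L2 = line_of (v d)"
    using p(1) \<open>L1 \<in> T\<close> \<open>L2 \<in> T\<close> by auto
  ultimately show ?thesis
    using that sing_eq_through_meet[OF assms] by blast
qed

end

lemma lattice_iso_imp_concurrency_preserving:
  assumes "labelled_arrangement v I" "labelled_arrangement w J"
    and "lattice_iso ((\<lambda>k. line_of (v k)) ` I) ((\<lambda>k. line_of (w k)) ` J)"
  obtains \<pi> where "bij_betw \<pi> I J"
    "\<And>i j k. i \<in> I \<Longrightarrow> j \<in> I \<Longrightarrow> k \<in> I \<Longrightarrow>
       bracket (v i) (v j) (v k) = 0 \<longleftrightarrow> bracket (w (\<pi> i)) (w (\<pi> j)) (w (\<pi> k)) = 0"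
proof -
  interpret V: labelled_arrangement v I by fact
  interpret W: labelled_arrangement w J by fact
  obtain \<sigma> where \<sigma>: "bij_betw \<sigma> V.lines W.lines"
    and \<sigma>_sing: "bij_betw (\<lambda>S. \<sigma> ` S) (sing V.lines) (sing W.lines)"
    using assms(3) unfolding lattice_iso_def by blast
  define \<pi> where "\<pi> = the_inv_into J (\<lambda>k. line_of (w k)) \<circ> \<sigma> \<circ> (\<lambda>k. line_of (v k))"
  have "bij_betw (\<lambda>k. line_of (v k)) I V.lines" "bij_betw (\<lambda>k. line_of (w k)) J W.lines"
    using V.inj_lines W.inj_lines by (simp_all add: bij_betw_def)
  then have \<pi>: "bij_betw \<pi> I J"
    unfolding \<pi>_def comp_assoc
    by (intro bij_betw_trans[OF bij_betw_trans[OF _ \<sigma>] bij_betw_the_inv_into])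
  have \<sigma>_\<pi>: "\<sigma> (line_of (v k)) = line_of (w (\<pi> k))" if "k \<in> I" for k
    using f_the_inv_into_f[OF W.inj_lines] bij_betwE[OF \<sigma>] that by (simp add: \<pi>_def)
  have "bracket (v i) (v j) (v k) = 0 \<longleftrightarrow> bracket (w (\<pi> i)) (w (\<pi> j)) (w (\<pi> k)) = 0"
    if ijk: "i \<in> I" "j \<in> I" "k \<in> I" for i j k
  proof (cases "i = j")
    case True
    then show ?thesis
      by (simp add: bracket_same)
  next
    case False
    let ?T = "V.through_meet i j"
    have "\<sigma> ` ?T \<in> sing W.lines"
      using bij_betwE[OF \<sigma>_sing] V.through_meet_in_sing ijk False by blast
    moreover have "line_of (v i) \<in> ?T" "line_of (v j) \<in> ?T"
      using ijk V.mem_through_meet_iff by (simp_all add: bracket_same)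
    then have "line_of (w (\<pi> i)) \<in> \<sigma> ` ?T" "line_of (w (\<pi> j)) \<in> \<sigma> ` ?T"
      using ijk \<sigma>_\<pi> by (metis imageI)+
    moreover have "\<pi> i \<in> J" "\<pi> j \<in> J" "\<pi> i \<noteq> \<pi> j"
      using \<pi> False ijk by (auto simp: bij_betw_def dest: inj_onD)
    ultimately have T: "\<sigma> ` ?T = W.through_meet (\<pi> i) (\<pi> j)"
      by (intro W.sing_eq_through_meet)
    have "bracket (v i) (v j) (v k) = 0 \<longleftrightarrow> line_of (v k) \<in> ?T"
      using ijk V.mem_through_meet_iff by simp
    also have "\<dots> \<longleftrightarrow> \<sigma> (line_of (v k)) \<in> \<sigma> ` ?T"
      using \<sigma> V.through_meet_subset ijk by (metis bij_betw_def imageI inj_on_image_mem_iff)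
    also have "\<dots> \<longleftrightarrow> bracket (w (\<pi> i)) (w (\<pi> j)) (w (\<pi> k)) = 0"
      using T \<sigma>_\<pi> W.mem_through_meet_iff \<pi> ijk by (simp add: bij_betwE)
    finally show ?thesis .
  qed
  with \<pi> that show ?thesis
    by blast
qed

lemma lattice_iso_if_concurrency_preserving:
  assumes "labelled_arrangement v I" "labelled_arrangement w I"
    and "\<And>i j k. i \<in> I \<Longrightarrow> j \<in> I \<Longrightarrow> k \<in> I \<Longrightarrow>
           bracket (v i) (v j) (v k) = 0 \<longleftrightarrow> bracket (w i) (w j) (w k) = 0"
  shows "lattice_iso ((\<lambda>k. line_of (v k)) ` I) ((\<lambda>k. line_of (w k)) ` I)"
proof -
  interpret V: labelled_arrangement v I by fact
  interpret W: labelled_arrangement w I by fact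
  define \<sigma> where "\<sigma> = (\<lambda>L. line_of (w (the_inv_into I (\<lambda>k. line_of (v k)) L)))"
  have \<sigma>_bij: "bij_betw \<sigma> V.lines W.lines"
  proof -
    have "bij_betw (\<lambda>k. line_of (v k)) I V.lines" "bij_betw (\<lambda>k. line_of (w k)) I W.lines"
      using V.inj_lines W.inj_lines by (simp_all add: bij_betw_def)
    then have "bij_betw ((\<lambda>k. line_of (w k)) \<circ> the_inv_into I (\<lambda>k. line_of (v k))) V.lines W.lines"
      by (rule bij_betw_trans[OF bij_betw_the_inv_into])
    then show ?thesis
      by (simp add: \<sigma>_def comp_def)
  qed
  have \<sigma>: "\<sigma> (line_of (v k)) = line_of (w k)" if "k \<in> I" for k
    using the_inv_into_f_f[OF V.inj_lines that] by (simp add: \<sigma>_def)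
  have \<sigma>_through_meet: "\<sigma> ` V.through_meet c d = W.through_meet c d"
    if "c \<in> I" "d \<in> I" for c d
  proof -
    have "\<sigma> ` V.through_meet c d
        = (\<lambda>m. line_of (w m)) ` {m \<in> I. bracket (v c) (v d) (v m) = 0}"
      unfolding V.through_meet_def image_image
      by (rule image_cong[OF refl]) (metis (mono_tags, lifting) mem_Collect_eq \<sigma>)
    also have "{m \<in> I. bracket (v c) (v d) (v m) = 0} = {m \<in> I. bracket (w c) (w d) (w m) = 0}"
      using assms(3) that by blast
    finally show ?thesis
      by (simp add: W.through_meet_def)
  qed
  have "(\<lambda>S. \<sigma> ` S) ` sing V.lines = sing W.lines"
  proof
    show "(\<lambda>S. \<sigma> ` S) ` sing V.lines \<subseteq> sing W.lines"
    proof
      fix T'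
      assume "T' \<in> (\<lambda>S. \<sigma> ` S) ` sing V.lines"
      then obtain T where "T \<in> sing V.lines" "T' = \<sigma> ` T"
        by blast
      moreover obtain c d where "c \<in> I" "d \<in> I" "c \<noteq> d" "T = V.through_meet c d"
        using V.sing_obtain_through_meet[OF \<open>T \<in> sing V.lines\<close>] by blast
      ultimately show "T' \<in> sing W.lines"
        by (simp add: \<sigma>_through_meet W.through_meet_in_sing)
    qed
    show "sing W.lines \<subseteq> (\<lambda>S. \<sigma> ` S) ` sing V.lines"
    proof
      fix T
      assume "T \<in> sing W.lines"
      then obtain c d where "c \<in> I" "d \<in> I" "c \<noteq> d" "T = W.through_meet c d"
        by (rule W.sing_obtain_through_meet)
      then have "T = \<sigma> ` V.through_meet c d" "V.through_meet c d \<in> sing V.lines"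
        by (simp_all add: \<sigma>_through_meet V.through_meet_in_sing)
      then show "T \<in> (\<lambda>S. \<sigma> ` S) ` sing V.lines"
        by blast
    qed
  qed
  moreover have "inj_on (\<lambda>S. \<sigma> ` S) (sing V.lines)"
  proof (rule inj_onI)
    fix S1 S2
    assume "S1 \<in> sing V.lines" "S2 \<in> sing V.lines" "\<sigma> ` S1 = \<sigma> ` S2"
    moreover from this(1,2) have "S1 \<subseteq> V.lines" "S2 \<subseteq> V.lines"
      by (auto simp: sing_def)
    moreover have "inj_on \<sigma> V.lines"
      using \<sigma>_bij by (simp add: bij_betw_def)
    ultimately show "S1 = S2"
      by (simp add: inj_on_image_eq_iff)
  qed
  ultimately have "bij_betw (\<lambda>S. \<sigma> ` S) (sing V.lines) (sing W.lines)"
    by (simp add: bij_betw_def)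
  with \<sigma>_bij show ?thesis
    unfolding lattice_iso_def by blast
qed

section \<open>The two arrangements\<close>

text \<open>Coefficient triples of L1, ..., L13 in the order of the statement: L(k+1) has index k.\<close>

definition lines1_int :: "(int \<times> int \<times> int) list" where
  "lines1_int = [(0,2,-1), (1,-1,0), (1,1,-1), (1,0,0), (2,-2,1), (1,0,-1), (2,6,-5), (0,1,0),
                 (0,1,-1), (0,0,1), (3,2,-3), (0,5,-3), (6,-2,-3)]"

definition lines2_int :: "(int \<times> int \<times> int) list" where
  "lines2_int = [(0,2,-1), (1,-1,0), (1,1,-1), (1,0,0), (2,-2,1), (1,0,-1), (2,6,-5), (0,1,0),
                 (0,1,-1), (0,0,1), (1,-3,-1), (0,2,1), (4,6,-13)]"

fun bracket_int :: "int \<times> int \<times> int \<Rightarrow> int \<times> int \<times> int \<Rightarrow> int \<times> int \<times> int \<Rightarrow> int" where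
  "bracket_int (a1, a2, a3) (b1, b2, b3) (c1, c2, c3) =
     a1 * (b2 * c3 - b3 * c2) - a2 * (b1 * c3 - b3 * c1) + a3 * (b1 * c2 - b2 * c1)"

fun ccross_int :: "int \<times> int \<times> int \<Rightarrow> int \<times> int \<times> int \<Rightarrow> int \<times> int \<times> int" where
  "ccross_int (a1, a2, a3) (b1, b2, b3) = (a2 * b3 - a3 * b2, a3 * b1 - a1 * b3, a1 * b2 - a2 * b1)"

fun vec_of_int3 :: "int \<times> int \<times> int \<Rightarrow> cvec" where
  "vec_of_int3 (a, b, c) = vector [of_int a, of_int b, of_int c]"

definition seq_of_int :: "(int \<times> int \<times> int) list \<Rightarrow> nat \<Rightarrow> cvec" where
  "seq_of_int xs k = vec_of_int3 (xs ! k)"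

abbreviation u1 :: "nat \<Rightarrow> cvec" where
  "u1 \<equiv> seq_of_int lines1_int"

abbreviation u2 :: "nat \<Rightarrow> cvec" where
  "u2 \<equiv> seq_of_int lines2_int"

definition arr1 :: "cvec set set" where
  "arr1 = (\<lambda>k. line_of (u1 k)) ` {..<13}"

definition arr2 :: "cvec set set" where
  "arr2 = (\<lambda>k. line_of (u2 k)) ` {..<13}"

lemma bracket_vec_of_int3:
  "bracket (vec_of_int3 a) (vec_of_int3 b) (vec_of_int3 c) = of_int (bracket_int a b c)"
  by (cases a; cases b; cases c) (simp add: bracket_expand)

lemma ccross_vec_of_int3: "ccross (vec_of_int3 a) (vec_of_int3 b) = vec_of_int3 (ccross_int a b)"
  by (cases a; cases b) (simp add: vec3_eq_iff ccross_nth)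

lemma vec_of_int3_eq_0_iff: "vec_of_int3 a = 0 \<longleftrightarrow> a = (0, 0, 0)"
  by (cases a) (simp add: vec3_eq_0_iff)

lemma vec_of_int3_rational: "vec_of_int3 a $ i \<in> \<rat>"
proof -
  obtain x y z where "a = (x, y, z)"
    by (cases a) blast
  moreover have "vector [of_int x, of_int y, of_int z] $ i \<in> (\<rat> :: complex set)"
    using exhaust_3[of i] by auto
  ultimately show ?thesis
    by simp
qed

lemma labelled_arrangement_seq_of_int:
  assumes "\<And>i. i < n \<Longrightarrow> xs ! i \<noteq> (0, 0, 0)"
    and "\<And>i j. i < n \<Longrightarrow> j < n \<Longrightarrow> i \<noteq> j \<Longrightarrow> ccross_int (xs ! i) (xs ! j) \<noteq> (0, 0, 0)"
  shows "labelled_arrangement (seq_of_int xs) {..<n}"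
proof
  show "seq_of_int xs k \<noteq> 0" if "k \<in> {..<n}" for k
    using assms(1) that by (simp add: seq_of_int_def vec_of_int3_eq_0_iff)
  show "inj_on (\<lambda>k. line_of (seq_of_int xs k)) {..<n}"
  proof (rule inj_onI, rule ccontr)
    fix i j
    assume "i \<in> {..<n}" "j \<in> {..<n}" "line_of (seq_of_int xs i) = line_of (seq_of_int xs j)" "i \<noteq> j"
    moreover from this(3) have "ccross (seq_of_int xs i) (seq_of_int xs j) = 0"
      by (simp add: ccross_eq_0_if_line_of_subset)
    ultimately show False
      using assms(2) by (simp add: seq_of_int_def ccross_vec_of_int3 vec_of_int3_eq_0_iff)
  qed
qed simp

lemma rational_arr_seq_of_int:
  assumes "labelled_arrangement (seq_of_int xs) I"
  shows "rational_arr ((\<lambda>k. line_of (seq_of_int xs k)) ` I)"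
  unfolding rational_arr_def
proof
  fix L
  assume "L \<in> (\<lambda>k. line_of (seq_of_int xs k)) ` I"
  then obtain k where "k \<in> I" "L = line_of (seq_of_int xs k)"
    by blast
  with labelled_arrangement.nonzero[OF assms] show "\<exists>a. a \<noteq> 0 \<and> (\<forall>i. a $ i \<in> \<rat>) \<and> L = line_of a"
    by (intro exI[of _ "seq_of_int xs k"]) (simp add: seq_of_int_def vec_of_int3_rational)
qed

lemma (in labelled_arrangement) arrangement_lines: "arrangement lines"
  using finite_index nonzero by (auto simp: arrangement_def is_line_def)

lemma (in labelled_arrangement) card_lines: "card lines = card I"
  using inj_lines by (rule card_image)

lemma all_less_13_iff: "(\<forall>i<13. P i) \<longleftrightarrow> list_all P [0..<13]"
  by (auto simp: list_all_iff)

lemma lines_int_nonzero: "\<forall>i<13. lines1_int ! i \<noteq> (0, 0, 0) \<and> lines2_int ! i \<noteq> (0, 0, 0)"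
  unfolding all_less_13_iff by code_simp

lemma lines_int_distinct:
  "\<forall>i<13. \<forall>j<13. i \<noteq> j \<longrightarrow> ccross_int (lines1_int ! i) (lines1_int ! j) \<noteq> (0, 0, 0)
                          \<and> ccross_int (lines2_int ! i) (lines2_int ! j) \<noteq> (0, 0, 0)"
  unfolding all_less_13_iff by code_simp

lemma lines_int_same_concurrences:
  "\<forall>i<13. \<forall>j<13. \<forall>k<13. bracket_int (lines1_int ! i) (lines1_int ! j) (lines1_int ! k) = 0
                        \<longleftrightarrow> bracket_int (lines2_int ! i) (lines2_int ! j) (lines2_int ! k) = 0"
  unfolding all_less_13_iff by code_simp

lemma labelled_arrangement_u1: "labelled_arrangement u1 {..<13}"
  using lines_int_nonzero lines_int_distinct by (intro labelled_arrangement_seq_of_int) simp_all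

lemma labelled_arrangement_u2: "labelled_arrangement u2 {..<13}"
  using lines_int_nonzero lines_int_distinct by (intro labelled_arrangement_seq_of_int) simp_all

lemma bracket_u1_eq_0_iff_bracket_u2_eq_0:
  "i < 13 \<Longrightarrow> j < 13 \<Longrightarrow> k < 13 \<Longrightarrow>
     bracket (u1 i) (u1 j) (u1 k) = 0 \<longleftrightarrow> bracket (u2 i) (u2 j) (u2 k) = 0"
  using lines_int_same_concurrences by (simp add: seq_of_int_def bracket_vec_of_int3)

lemma lattice_iso_arr1_arr2: "lattice_iso arr1 arr2"
  unfolding arr1_def arr2_def
  using labelled_arrangement_u1 labelled_arrangement_u2 bracket_u1_eq_0_iff_bracket_u2_eq_0
  by (intro lattice_iso_if_concurrency_preserving) simp_all

lemma arr1_eq: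
  "{lin 0 2 (-1), lin 1 (-1) 0, lin 1 1 (-1), lin 1 0 0, lin 2 (-2) 1, lin 1 0 (-1), lin 2 6 (-5),
    lin 0 1 0, lin 0 1 (-1), lin 0 0 1} \<union> {lin 3 2 (-3), lin 0 5 (-3), lin 6 (-2) (-3)} = arr1"
proof -
  have "{..<13::nat} = {0, 1, 2, 3, 4, 5, 6, 7, 8, 9, 10, 11, 12}"
    by auto presburger
  then show ?thesis
    by (simp add: arr1_def seq_of_int_def lines1_int_def lin_def del: Un_insert_right)
qed

lemma arr2_eq:
  "{lin 0 2 (-1), lin 1 (-1) 0, lin 1 1 (-1), lin 1 0 0, lin 2 (-2) 1, lin 1 0 (-1), lin 2 6 (-5),
    lin 0 1 0, lin 0 1 (-1), lin 0 0 1} \<union> {lin 1 (-3) (-1), lin 0 2 1, lin 4 6 (-13)} = arr2"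
proof -
  have "{..<13::nat} = {0, 1, 2, 3, 4, 5, 6, 7, 8, 9, 10, 11, 12}"
    by auto presburger
  then show ?thesis
    by (simp add: arr2_def seq_of_int_def lines2_int_def lin_def del: Un_insert_right)
qed

section \<open>A cross-ratio separating the realizations\<close>

definition concurrent_triples :: "nat \<Rightarrow> (nat \<Rightarrow> cvec) \<Rightarrow> (nat \<times> nat \<times> nat) set" where
  "concurrent_triples n v = {(i, j, k). i < n \<and> j < n \<and> k < n \<and> bracket (v i) (v j) (v k) = 0}"

definition proj_equivalent :: "nat \<Rightarrow> (nat \<Rightarrow> cvec) \<Rightarrow> (nat \<Rightarrow> cvec) \<Rightarrow> bool" where
  "proj_equivalent n v w \<longleftrightarrow>
     (\<exists>(h :: complex^3^3) c. det h \<noteq> 0 \<and> (\<forall>k<n. c k \<noteq> 0 \<and> w k = c k *s (h *v v k)))"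

lemma concurrent_triples_proj_equivalent:
  assumes "proj_equivalent n v w"
  shows "concurrent_triples n w = concurrent_triples n v"
proof -
  obtain h c where "det h \<noteq> 0" "\<And>k. k < n \<Longrightarrow> c k \<noteq> 0" "\<And>k. k < n \<Longrightarrow> w k = c k *s (h *v v k)"
    using assms by (auto simp: proj_equivalent_def)
  then show ?thesis
    by (auto simp: concurrent_triples_def bracket_scale bracket_matrix_vector_mult)
qed

lemma proj_equivalent_neq_0:
  assumes "proj_equivalent n v w" "k < n" "v k \<noteq> 0"
  shows "w k \<noteq> 0"
proof -
  obtain h c where "det h \<noteq> 0" "c k \<noteq> 0" "w k = c k *s (h *v v k)"
    using assms(1,2) by (auto simp: proj_equivalent_def)
  with assms(3) show ?thesis
    by (metis matrix_vector_mult_neq_0 vector_mul_eq_0)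
qed

lemma proj_equivalent_comp:
  assumes "proj_equivalent n v w" "\<pi> permutes {..<n}"
  shows "proj_equivalent n (v \<circ> \<pi>) (w \<circ> \<pi>)"
proof -
  obtain h c where "det h \<noteq> 0" "\<forall>k<n. c k \<noteq> 0 \<and> w k = c k *s (h *v v k)"
    using assms(1) by (auto simp: proj_equivalent_def)
  moreover have "\<pi> k < n" if "k < n" for k
    using permutes_in_image[OF assms(2)] that by simp
  ultimately show ?thesis
    unfolding proj_equivalent_def by (intro exI[of _ h] exI[of _ "c \<circ> \<pi>"]) simp
qed

text \<open>Index 3 is L4, and 7, 9, 11, 8 are L8, L10, L12, L9: the equations Q1 = 0 and Q2 = 0
  prescribe two different values for the cross-ratio of the four points in which L8, L10, L12
  and L9 meet L4.\<close>

definition Q1 :: "(nat \<Rightarrow> cvec) \<Rightarrow> complex" where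
  "Q1 v = 5 * bracket (v 3) (v 7) (v 11) * bracket (v 3) (v 9) (v 8)
        - 3 * bracket (v 3) (v 9) (v 11) * bracket (v 3) (v 7) (v 8)"

definition Q2 :: "(nat \<Rightarrow> cvec) \<Rightarrow> complex" where
  "Q2 v = 2 * bracket (v 3) (v 7) (v 11) * bracket (v 3) (v 9) (v 8)
        + bracket (v 3) (v 9) (v 11) * bracket (v 3) (v 7) (v 8)"

lemma Q1_Q2_proj_equivalent:
  assumes "proj_equivalent 13 v w"
  shows "Q1 w = 0 \<longleftrightarrow> Q1 v = 0" "Q2 w = 0 \<longleftrightarrow> Q2 v = 0"
proof -
  obtain h c where h: "det h \<noteq> 0" and c: "\<And>k. k < 13 \<Longrightarrow> c k \<noteq> 0"
    and w: "\<And>k. k < 13 \<Longrightarrow> w k = c k *s (h *v v k)"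
    using assms by (auto simp: proj_equivalent_def)
  define f where "f = c 3 * c 3 * c 7 * c 8 * c 9 * c 11 * det h ^ 2"
  have "f \<noteq> 0"
    using h c by (simp add: f_def)
  moreover have "Q1 w = f * Q1 v" "Q2 w = f * Q2 v"
    by (simp_all add: f_def Q1_def Q2_def w bracket_scale bracket_matrix_vector_mult
        power2_eq_square algebra_simps)
  ultimately show "Q1 w = 0 \<longleftrightarrow> Q1 v = 0" "Q2 w = 0 \<longleftrightarrow> Q2 v = 0"
    by simp_all
qed

lemma Q1_u1: "Q1 u1 = 0"
  unfolding Q1_def seq_of_int_def bracket_vec_of_int3 by (simp add: lines1_int_def)

lemma Q2_u2: "Q2 u2 = 0"
  unfolding Q2_def seq_of_int_def bracket_vec_of_int3 by (simp add: lines2_int_def)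

definition A1_concurrent :: "nat \<Rightarrow> nat \<Rightarrow> nat \<Rightarrow> bool" where
  "A1_concurrent i j k \<longleftrightarrow> bracket_int (lines1_int ! i) (lines1_int ! j) (lines1_int ! k) = 0"

lemma bracket_u1_eq_0_iff: "bracket (u1 i) (u1 j) (u1 k) = 0 \<longleftrightarrow> A1_concurrent i j k"
  by (simp add: seq_of_int_def bracket_vec_of_int3 A1_concurrent_def)

lemma bracket_eq_0_iff_A1_concurrent:
  assumes "concurrent_triples 13 v = concurrent_triples 13 u1" "i < 13" "j < 13" "k < 13"
  shows "bracket (v i) (v j) (v k) = 0 \<longleftrightarrow> A1_concurrent i j k"
proof -
  have "bracket (v i) (v j) (v k) = 0 \<longleftrightarrow> (i, j, k) \<in> concurrent_triples 13 v"
    using assms(2-4) by (simp add: concurrent_triples_def)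
  also have "\<dots> \<longleftrightarrow> A1_concurrent i j k"
    using assms by (simp add: concurrent_triples_def bracket_u1_eq_0_iff)
  finally show ?thesis .
qed

lemma A1_incidences:
  "A1_concurrent 7 9 8 \<and> A1_concurrent 2 3 8 \<and> A1_concurrent 3 5 9 \<and> A1_concurrent 2 5 7 \<and>
   A1_concurrent 1 3 7 \<and> A1_concurrent 1 5 8 \<and> A1_concurrent 0 7 9 \<and> A1_concurrent 0 1 2 \<and>
   A1_concurrent 1 4 9 \<and> A1_concurrent 0 3 4 \<and> A1_concurrent 0 5 6 \<and> A1_concurrent 2 4 6 \<and>
   A1_concurrent 7 9 11 \<and> A1_concurrent 2 7 10 \<and> A1_concurrent 1 10 11 \<and>
   A1_concurrent 0 10 12 \<and> A1_concurrent 4 5 12 \<and> A1_concurrent 6 11 12 \<and>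
   \<not> A1_concurrent 3 7 10 \<and> \<not> A1_concurrent 7 9 12 \<and> \<not> A1_concurrent 3 7 9 \<and>
   \<not> A1_concurrent 7 9 2 \<and> \<not> A1_concurrent 9 3 2 \<and> \<not> A1_concurrent 3 7 2"
  by code_simp

lemma eq_if_mult_diff_eq_0:
  fixes k :: "'a::field"
  assumes "k \<noteq> 0" "e = k * (x - y)" "e = 0"
  shows "x = y"
  using assms by simp

lemma base_lines_rigid:
  assumes conc: "concurrent_triples 13 w = concurrent_triples 13 u1"
    and nz: "\<And>k. k < 13 \<Longrightarrow> w k \<noteq> 0"
    and frame: "w 3 $ 2 = 0" "w 3 $ 3 = 0" "w 7 $ 1 = 0" "w 7 $ 3 = 0" "w 9 $ 1 = 0" "w 9 $ 2 = 0"
      "w 2 = vector [1, 1, -1]"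
    and "k < 10"
  shows "\<exists>c. c \<noteq> 0 \<and> w k = c *s u1 k"
proof -
  have z: "bracket (w 7) (w 9) (w 8) = 0" "bracket (w 2) (w 3) (w 8) = 0"
    "bracket (w 3) (w 5) (w 9) = 0" "bracket (w 2) (w 5) (w 7) = 0"
    "bracket (w 1) (w 3) (w 7) = 0" "bracket (w 1) (w 5) (w 8) = 0"
    "bracket (w 0) (w 7) (w 9) = 0" "bracket (w 0) (w 1) (w 2) = 0"
    "bracket (w 1) (w 4) (w 9) = 0" "bracket (w 0) (w 3) (w 4) = 0"
    "bracket (w 0) (w 5) (w 6) = 0" "bracket (w 2) (w 4) (w 6) = 0"
    using A1_incidences by (simp_all add: bracket_eq_0_iff_A1_concurrent[OF conc])
  (* The simplifier rewrites the index 1 to Suc 0, so the lines get names before it sees them. *)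
  obtain a0 a1 a2 a3 a4 a5 a6 a7 a8 a9 where
    a: "w 0 = a0" "w 1 = a1" "w 2 = a2" "w 3 = a3" "w 4 = a4" "w 5 = a5" "w 6 = a6" "w 7 = a7"
       "w 8 = a8" "w 9 = a9"
    by blast
  note z = z[unfolded a] and frame = frame[unfolded a]
  have a_nz: "a0 \<noteq> 0" "a1 \<noteq> 0" "a3 \<noteq> 0" "a4 \<noteq> 0" "a5 \<noteq> 0" "a6 \<noteq> 0" "a7 \<noteq> 0"
    "a8 \<noteq> 0" "a9 \<noteq> 0"
    using nz[of 0] nz[of 1] nz[of 3] nz[of 4] nz[of 5] nz[of 6] nz[of 7] nz[of 8] nz[of 9]
    unfolding a by simp_all
  obtain s t u where stu: "a3 $ 1 = s" "a7 $ 2 = t" "a9 $ 3 = u"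
    by blast
  have "s \<noteq> 0" "t \<noteq> 0" "u \<noteq> 0"
    using a_nz frame stu by (auto simp: vec3_eq_0_iff)
  have a2_coords: "a2 $ 1 = 1" "a2 $ 2 = 1" "a2 $ 3 = -1"
    using frame(7) by simp_all
  note B = bracket_expand frame(1-6) a2_coords stu
  have "bracket a7 a9 a8 = t * u * a8 $ 1"
    by (simp add: B algebra_simps)
  with z(1) \<open>t \<noteq> 0\<close> \<open>u \<noteq> 0\<close> have a8_1: "a8 $ 1 = 0"
    by simp
  obtain y8 where y8: "a8 $ 2 = y8"
    by blast
  have "bracket a2 a3 a8 = (- s) * (a8 $ 3 - (- y8))"
    by (simp add: B a8_1 y8 algebra_simps)
  from eq_if_mult_diff_eq_0[OF _ this z(2)] \<open>s \<noteq> 0\<close> have a8_3: "a8 $ 3 = - y8"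
    by simp
  have "bracket a3 a5 a9 = s * u * a5 $ 2"
    by (simp add: B algebra_simps)
  with z(3) \<open>s \<noteq> 0\<close> \<open>u \<noteq> 0\<close> have a5_2: "a5 $ 2 = 0"
    by simp
  obtain x5 where x5: "a5 $ 1 = x5"
    by blast
  have "bracket a2 a5 a7 = (- t) * (a5 $ 3 - (- x5))"
    by (simp add: B a5_2 x5 algebra_simps)
  from eq_if_mult_diff_eq_0[OF _ this z(4)] \<open>t \<noteq> 0\<close> have a5_3: "a5 $ 3 = - x5"
    by simp
  have "bracket a1 a3 a7 = s * t * a1 $ 3"
    by (simp add: B algebra_simps)
  with z(5) \<open>s \<noteq> 0\<close> \<open>t \<noteq> 0\<close> have a1_3: "a1 $ 3 = 0"
    by simp
  obtain x1 where x1: "a1 $ 1 = x1"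
    by blast
  have "x5 \<noteq> 0" "y8 \<noteq> 0"
    using a_nz a5_2 a5_3 x5 a8_1 a8_3 y8 by (auto simp: vec3_eq_0_iff)
  have "bracket a1 a5 a8 = (x5 * y8) * (a1 $ 2 - (- x1))"
    by (simp add: B a1_3 x1 x5 a5_2 a5_3 y8 a8_1 a8_3 algebra_simps)
  from eq_if_mult_diff_eq_0[OF _ this z(6)] \<open>x5 \<noteq> 0\<close> \<open>y8 \<noteq> 0\<close> have a1_2: "a1 $ 2 = - x1"
    by simp
  have "x1 \<noteq> 0"
    using a_nz a1_2 a1_3 x1 by (auto simp: vec3_eq_0_iff)
  have "bracket a0 a7 a9 = t * u * a0 $ 1"
    by (simp add: B algebra_simps)
  with z(7) \<open>t \<noteq> 0\<close> \<open>u \<noteq> 0\<close> have a0_1: "a0 $ 1 = 0"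
    by simp
  obtain z0 where z0: "a0 $ 3 = z0"
    by blast
  have "bracket a0 a1 a2 = x1 * (a0 $ 2 - (- 2 * z0))"
    by (simp add: B a0_1 z0 x1 a1_2 a1_3 algebra_simps)
  from eq_if_mult_diff_eq_0[OF _ this z(8)] \<open>x1 \<noteq> 0\<close> have a0_2: "a0 $ 2 = - 2 * z0"
    by simp
  have "z0 \<noteq> 0"
    using a_nz a0_1 a0_2 z0 by (auto simp: vec3_eq_0_iff)
  obtain x4 z4 where x4: "a4 $ 1 = x4" and z4: "a4 $ 3 = z4"
    by blast
  have "bracket a1 a4 a9 = (u * x1) * (a4 $ 2 - (- x4))"
    by (simp add: B x1 a1_2 a1_3 x4 algebra_simps)
  from eq_if_mult_diff_eq_0[OF _ this z(9)] \<open>u \<noteq> 0\<close> \<open>x1 \<noteq> 0\<close> have a4_2: "a4 $ 2 = - x4"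
    by simp
  have "bracket a0 a3 a4 = (- s * z0) * (x4 - 2 * z4)"
    by (simp add: B a0_1 a0_2 z0 x4 a4_2 z4 algebra_simps)
  from eq_if_mult_diff_eq_0[OF _ this z(10)] \<open>s \<noteq> 0\<close> \<open>z0 \<noteq> 0\<close> have x4_eq: "x4 = 2 * z4"
    by simp
  have "z4 \<noteq> 0"
    using a_nz x4 a4_2 z4 x4_eq by (auto simp: vec3_eq_0_iff)
  obtain x6 z6 where x6: "a6 $ 1 = x6" and z6: "a6 $ 3 = z6"
    by blast
  have "bracket a0 a5 a6 = (z0 * x5) * (a6 $ 2 - (- 2 * z6 - 2 * x6))"
    by (simp add: B a0_1 a0_2 z0 x5 a5_2 a5_3 x6 z6 algebra_simps)
  from eq_if_mult_diff_eq_0[OF _ this z(11)] \<open>z0 \<noteq> 0\<close> \<open>x5 \<noteq> 0\<close>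
  have a6_2: "a6 $ 2 = - 2 * z6 - 2 * x6"
    by simp
  have "bracket a2 a4 a6 = (2 * z4) * (z6 - (- 5 / 2 * x6))"
    by (simp add: B x4 x4_eq a4_2 z4 x6 z6 a6_2 algebra_simps)
  from eq_if_mult_diff_eq_0[OF _ this z(12)] \<open>z4 \<noteq> 0\<close> have z6_eq: "z6 = - 5 / 2 * x6"
    by simp
  have "x6 \<noteq> 0"
    using a_nz x6 a6_2 z6 z6_eq by (auto simp: vec3_eq_0_iff)
  note U = vec3_eq_iff seq_of_int_def lines1_int_def
  have "\<exists>c. c \<noteq> 0 \<and> a0 = c *s u1 0"
    using \<open>z0 \<noteq> 0\<close> by (intro exI[of _ "- z0"]) (simp add: U a0_1 a0_2 z0)
  moreover have "\<exists>c. c \<noteq> 0 \<and> a1 = c *s u1 1"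
    using \<open>x1 \<noteq> 0\<close> by (intro exI[of _ x1]) (simp add: U x1 a1_2 a1_3)
  moreover have "\<exists>c. c \<noteq> 0 \<and> a2 = c *s u1 2"
    by (intro exI[of _ 1]) (simp add: U a2_coords)
  moreover have "\<exists>c. c \<noteq> 0 \<and> a3 = c *s u1 3"
    using \<open>s \<noteq> 0\<close> by (intro exI[of _ s]) (simp add: U stu frame)
  moreover have "\<exists>c. c \<noteq> 0 \<and> a4 = c *s u1 4"
    using \<open>z4 \<noteq> 0\<close> by (intro exI[of _ z4]) (simp add: U x4 x4_eq a4_2 z4)
  moreover have "\<exists>c. c \<noteq> 0 \<and> a5 = c *s u1 5"
    using \<open>x5 \<noteq> 0\<close> by (intro exI[of _ x5]) (simp add: U x5 a5_2 a5_3)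
  moreover have "\<exists>c. c \<noteq> 0 \<and> a6 = c *s u1 6"
    using \<open>x6 \<noteq> 0\<close> by (intro exI[of _ "x6 / 2"]) (simp add: U x6 a6_2 z6 z6_eq)
  moreover have "\<exists>c. c \<noteq> 0 \<and> a7 = c *s u1 7"
    using \<open>t \<noteq> 0\<close> by (intro exI[of _ t]) (simp add: U stu frame)
  moreover have "\<exists>c. c \<noteq> 0 \<and> a8 = c *s u1 8"
    using \<open>y8 \<noteq> 0\<close> by (intro exI[of _ y8]) (simp add: U a8_1 y8 a8_3)
  moreover have "\<exists>c. c \<noteq> 0 \<and> a9 = c *s u1 9"
    using \<open>u \<noteq> 0\<close> by (intro exI[of _ u]) (simp add: U stu frame)
  moreover have "k = 0 \<or> k = 1 \<or> k = 2 \<or> k = 3 \<or> k = 4 \<or> k = 5 \<or> k = 6 \<or> k = 7 \<or> k = 8 \<or> k = 9"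
    using \<open>k < 10\<close> by presburger
  ultimately show ?thesis
    unfolding a[symmetric] by (elim disjE) blast+
qed

lemma normalized_Q1_eq_0_iff_Q2_neq_0:
  assumes conc: "concurrent_triples 13 w = concurrent_triples 13 u1"
    and nz: "\<And>k. k < 13 \<Longrightarrow> w k \<noteq> 0"
    and frame: "w 3 $ 2 = 0" "w 3 $ 3 = 0" "w 7 $ 1 = 0" "w 7 $ 3 = 0" "w 9 $ 1 = 0" "w 9 $ 2 = 0"
      "w 2 = vector [1, 1, -1]"
  shows "Q1 w = 0 \<longleftrightarrow> Q2 w \<noteq> 0"
proof -
  have z: "bracket (w 7) (w 9) (w 11) = 0" "bracket (w 2) (w 7) (w 10) = 0"
    "bracket (w 1) (w 10) (w 11) = 0" "bracket (w 0) (w 10) (w 12) = 0"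
    "bracket (w 4) (w 5) (w 12) = 0" "bracket (w 6) (w 11) (w 12) = 0"
    and nd: "bracket (w 3) (w 7) (w 10) \<noteq> 0" "bracket (w 7) (w 9) (w 12) \<noteq> 0"
    using A1_incidences by (simp_all add: bracket_eq_0_iff_A1_concurrent[OF conc])
  note base = base_lines_rigid[OF conc nz frame]
  obtain a0 a1 a3 a4 a5 a6 a7 a8 a9 a10 a11 a12 where
    a: "w 0 = a0" "w 1 = a1" "w 3 = a3" "w 4 = a4" "w 5 = a5" "w 6 = a6" "w 7 = a7" "w 8 = a8"
       "w 9 = a9" "w 10 = a10" "w 11 = a11" "w 12 = a12"
    by blast
  note z = z[unfolded a] and nd = nd[unfolded a]
  from base[of 0, unfolded a] obtain c0 where c0: "c0 \<noteq> 0" "a0 = c0 *s u1 0" by auto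
  from base[of 1, unfolded a] obtain c1 where c1: "c1 \<noteq> 0" "a1 = c1 *s u1 1" by auto
  from base[of 3, unfolded a] obtain c3 where c3: "c3 \<noteq> 0" "a3 = c3 *s u1 3" by auto
  from base[of 4, unfolded a] obtain c4 where c4: "c4 \<noteq> 0" "a4 = c4 *s u1 4" by auto
  from base[of 5, unfolded a] obtain c5 where c5: "c5 \<noteq> 0" "a5 = c5 *s u1 5" by auto
  from base[of 6, unfolded a] obtain c6 where c6: "c6 \<noteq> 0" "a6 = c6 *s u1 6" by auto
  from base[of 7, unfolded a] obtain c7 where c7: "c7 \<noteq> 0" "a7 = c7 *s u1 7" by auto
  from base[of 8, unfolded a] obtain c8 where c8: "c8 \<noteq> 0" "a8 = c8 *s u1 8" by auto
  from base[of 9, unfolded a] obtain c9 where c9: "c9 \<noteq> 0" "a9 = c9 *s u1 9" by auto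
  obtain p q r e b c x y z where
    coords: "a10 $ 1 = p" "a10 $ 2 = q" "a10 $ 3 = r" "a11 $ 1 = e" "a11 $ 2 = b"
      "a11 $ 3 = c" "a12 $ 1 = x" "a12 $ 2 = y" "a12 $ 3 = z"
    by blast
  note B = bracket_expand c0(2) c1(2) c3(2) c4(2) c5(2) c6(2) c7(2) c8(2) c9(2) frame(7) coords
    seq_of_int_def lines1_int_def
  have "bracket a7 a9 a11 = c7 * c9 * e"
    by (simp add: B algebra_simps)
  with z(1) c7 c9 have "e = 0"
    by simp
  have "bracket (w 2) a7 a10 = c7 * (r + p)"
    by (simp add: B algebra_simps)
  with z(2) c7 have "r = - p"
    by (simp add: eq_neg_iff_add_eq_0)
  have "bracket a3 a7 a10 = c3 * c7 * r"
    by (simp add: B algebra_simps)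
  with nd(1) \<open>r = - p\<close> have "p \<noteq> 0"
    by auto
  have "bracket a7 a9 a12 = c7 * c9 * x"
    by (simp add: B algebra_simps)
  with nd(2) have "x \<noteq> 0"
    by auto
  have "bracket a1 a10 a11 = c1 * (q * c + p * b + p * c)"
    by (simp add: B \<open>e = 0\<close> \<open>r = - p\<close> algebra_simps)
  with z(3) c1 have E1: "q * c + p * b + p * c = 0"
    by simp
  have "bracket a0 a10 a12 = - c0 * (2 * p * z + 2 * p * x + p * y - q * x)"
    by (simp add: B \<open>r = - p\<close> algebra_simps)
  with z(4) c0 have E2: "2 * p * z + 2 * p * x + p * y - q * x = 0"
    by simp
  have "bracket a4 a5 a12 = c4 * c5 * (3 * y + 2 * x + 2 * z)"
    by (simp add: B algebra_simps)
  with z(5) c4 c5 have E3: "3 * y + 2 * x + 2 * z = 0"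
    by simp
  have "bracket a6 a11 a12 = c6 * (2 * b * z - 2 * c * y + 6 * c * x + 5 * b * x)"
    by (simp add: B \<open>e = 0\<close> algebra_simps)
  with z(6) c6 have E4: "2 * b * z - 2 * c * y + 6 * c * x + 5 * b * x = 0"
    by simp
  have "x * p * ((3 * b + 5 * c) * (b - 2 * c)) = 0"
    using E1 E2 E3 E4 by algebra
  with \<open>x \<noteq> 0\<close> \<open>p \<noteq> 0\<close> have product: "(3 * b + 5 * c) * (b - 2 * c) = 0"
    by simp
  have "Q1 w = - (c3 * c3 * c7 * c8 * c9) * (3 * b + 5 * c)"
    "Q2 w = c3 * c3 * c7 * c8 * c9 * (b - 2 * c)"
    by (simp_all add: Q1_def Q2_def a B \<open>e = 0\<close> algebra_simps)
  moreover have "b \<noteq> 0 \<or> c \<noteq> 0"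
    using nz[of 11] \<open>e = 0\<close> coords by (auto simp: a vec3_eq_0_iff)
  ultimately show ?thesis
    using product c3 c7 c8 c9 by auto
qed

lemma Q1_eq_0_iff_Q2_neq_0:
  assumes conc: "concurrent_triples 13 v = concurrent_triples 13 u1"
    and nz: "\<And>k. k < 13 \<Longrightarrow> v k \<noteq> 0"
  shows "Q1 v = 0 \<longleftrightarrow> Q2 v \<noteq> 0"
proof -
  have "bracket (v 3) (v 7) (v 9) \<noteq> 0" "bracket (v 7) (v 9) (v 2) \<noteq> 0"
    "bracket (v 9) (v 3) (v 2) \<noteq> 0" "bracket (v 3) (v 7) (v 2) \<noteq> 0"
    using A1_incidences by (simp_all add: bracket_eq_0_iff_A1_concurrent[OF conc])
  then obtain M :: "complex^3^3" where M: "det M \<noteq> 0"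
    and frame: "(M *v v 3)$2 = 0" "(M *v v 3)$3 = 0" "(M *v v 7)$1 = 0" "(M *v v 7)$3 = 0"
      "(M *v v 9)$1 = 0" "(M *v v 9)$2 = 0" "M *v v 2 = vector [1, 1, -1]"
    by (rule projective_frame)
  define w where "w k = M *v v k" for k
  have pe: "proj_equivalent 13 v w"
    unfolding proj_equivalent_def w_def using M by (intro exI[of _ M] exI[of _ "\<lambda>_. 1"]) simp
  have "Q1 w = 0 \<longleftrightarrow> Q2 w \<noteq> 0"
  proof (rule normalized_Q1_eq_0_iff_Q2_neq_0)
    show "concurrent_triples 13 w = concurrent_triples 13 u1"
      using concurrent_triples_proj_equivalent[OF pe] conc by simp
    show "w k \<noteq> 0" if "k < 13" for k
      using proj_equivalent_neq_0[OF pe that nz[OF that]] .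
  qed (use frame in \<open>simp_all add: w_def\<close>)
  then show ?thesis
    using Q1_Q2_proj_equivalent[OF pe] by simp
qed

section \<open>The combinatorics has no symmetry\<close>

definition meet_size :: "nat \<Rightarrow> nat \<Rightarrow> nat" where
  "meet_size i j = length (filter (A1_concurrent i j) [0..<13])"

definition meet_profile :: "nat \<Rightarrow> nat \<Rightarrow> nat" where
  "meet_profile i s = length (filter (\<lambda>j. j \<noteq> i \<and> meet_size i j = s) [0..<13])"

lemma length_filter_upt: "length (filter P [0..<n]) = card {j \<in> {..<n}. P j}"
proof -
  have "set (filter P [0..<n]) = {j \<in> {..<n}. P j}"
    by auto
  then show ?thesis
    by (metis distinct_card distinct_filter distinct_upt)
qed

lemma card_permutes_Collect:
  assumes "\<rho> permutes S"
  shows "card {x \<in> S. P (\<rho> x)} = card {x \<in> S. P x}"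
proof -
  have "card {x \<in> S. P (\<rho> x)} = card (\<rho> -` {x \<in> S. P x})"
    using permutes_in_image[OF assms] by (intro arg_cong[where f = card]) blast
  also have "\<dots> = card {x \<in> S. P x}"
    using permutes_surj[OF assms] by (intro card_vimage_inj permutes_inj[OF assms]) auto
  finally show ?thesis .
qed

text \<open>For i \<noteq> j, meet_size i j is the number of lines through the intersection point of lines
  i and j. The lines 0, 1, 2, 5, 7 and 10 are told apart by the multiplicities of the points on
  them, and every line is determined by the triples it forms with these six.\<close>

lemma A1_profiles_distinct:
  "\<forall>x<13. list_all (\<lambda>i. meet_profile x 2 = meet_profile i 2 \<and> meet_profile x 3 = meet_profile i 3
      \<and> meet_profile x 4 = meet_profile i 4 \<and> meet_profile x 5 = meet_profile i 5 \<longrightarrow> x = i)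
    [0, 1, 2, 5, 7, 10]"
  unfolding all_less_13_iff by code_simp

lemma A1_determined_by_anchors:
  "\<forall>i<13. \<forall>x<13. list_all (\<lambda>j. list_all (\<lambda>k. A1_concurrent x j k = A1_concurrent i j k)
      [0, 1, 2, 5, 7, 10]) [0, 1, 2, 5, 7, 10] \<longrightarrow> x = i"
  unfolding all_less_13_iff by code_simp

lemma A1_automorphism_trivial:
  assumes \<rho>: "\<rho> permutes {..<13}"
    and conc: "\<And>i j k. i < 13 \<Longrightarrow> j < 13 \<Longrightarrow> k < 13 \<Longrightarrow>
      A1_concurrent (\<rho> i) (\<rho> j) (\<rho> k) = A1_concurrent i j k"
  shows "\<rho> = id"
proof -
  have lt: "\<rho> i < 13 \<longleftrightarrow> i < 13" for i
    using permutes_in_image[OF \<rho>] by simp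
  have size: "meet_size (\<rho> i) (\<rho> j) = meet_size i j" if "i < 13" "j < 13" for i j
  proof -
    have "meet_size (\<rho> i) (\<rho> j) = card {k \<in> {..<13}. A1_concurrent (\<rho> i) (\<rho> j) (\<rho> k)}"
      unfolding meet_size_def length_filter_upt
      by (rule card_permutes_Collect[OF \<rho>, of "A1_concurrent (\<rho> i) (\<rho> j)", symmetric])
    also have "{k \<in> {..<13}. A1_concurrent (\<rho> i) (\<rho> j) (\<rho> k)} = {k \<in> {..<13}. A1_concurrent i j k}"
      using conc that by (simp cong: conj_cong)
    finally show ?thesis
      by (simp only: meet_size_def length_filter_upt)
  qed
  have profile: "meet_profile (\<rho> i) s = meet_profile i s" if "i < 13" for i s
  proof -
    have "meet_profile (\<rho> i) s = card {j \<in> {..<13}. \<rho> j \<noteq> \<rho> i \<and> meet_size (\<rho> i) (\<rho> j) = s}"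
      unfolding meet_profile_def length_filter_upt
      by (rule card_permutes_Collect[OF \<rho>, of "\<lambda>j. j \<noteq> \<rho> i \<and> meet_size (\<rho> i) j = s", symmetric])
    also have "{j \<in> {..<13}. \<rho> j \<noteq> \<rho> i \<and> meet_size (\<rho> i) (\<rho> j) = s}
        = {j \<in> {..<13}. j \<noteq> i \<and> meet_size i j = s}"
      using size that permutes_inj[OF \<rho>] by (simp add: inj_eq cong: conj_cong)
    finally show ?thesis
      by (simp only: meet_profile_def length_filter_upt)
  qed
  have anchor: "\<rho> i = i" if "i \<in> set [0, 1, 2, 5, 7, 10]" for i
  proof -
    have "i < 13"
      using that by auto
    then have "list_all (\<lambda>i'. meet_profile (\<rho> i) 2 = meet_profile i' 2
        \<and> meet_profile (\<rho> i) 3 = meet_profile i' 3 \<and> meet_profile (\<rho> i) 4 = meet_profile i' 4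
        \<and> meet_profile (\<rho> i) 5 = meet_profile i' 5 \<longrightarrow> \<rho> i = i') [0, 1, 2, 5, 7, 10]"
      using A1_profiles_distinct lt by blast
    with that have "meet_profile (\<rho> i) 2 = meet_profile i 2
        \<and> meet_profile (\<rho> i) 3 = meet_profile i 3 \<and> meet_profile (\<rho> i) 4 = meet_profile i 4
        \<and> meet_profile (\<rho> i) 5 = meet_profile i 5 \<longrightarrow> \<rho> i = i"
      unfolding list_all_iff by blast
    with profile[OF \<open>i < 13\<close>] show ?thesis
      by simp
  qed
  have "\<rho> i = i" if "i < 13" for i
  proof -
    have "A1_concurrent (\<rho> i) j k = A1_concurrent i j k"
      if "j \<in> set [0, 1, 2, 5, 7, 10]" "k \<in> set [0, 1, 2, 5, 7, 10]" for j k
    proof -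
      have "A1_concurrent (\<rho> i) j k = A1_concurrent (\<rho> i) (\<rho> j) (\<rho> k)"
        using anchor that by simp
      also have "\<dots> = A1_concurrent i j k"
        using conc \<open>i < 13\<close> that by auto
      finally show ?thesis .
    qed
    then have "list_all (\<lambda>j. list_all (\<lambda>k. A1_concurrent (\<rho> i) j k = A1_concurrent i j k)
        [0, 1, 2, 5, 7, 10]) [0, 1, 2, 5, 7, 10]"
      unfolding list_all_iff by blast
    then show ?thesis
      using A1_determined_by_anchors that lt by blast
  qed
  moreover have "\<rho> i = i" if "\<not> i < 13" for i
    using permutes_not_in[OF \<rho>] that by simp
  ultimately show ?thesis
    by (metis eq_id_iff)
qed

lemma mem_concurrent_triples_comp:
  assumes "\<pi> permutes {..<n}"
  shows "(i, j, k) \<in> concurrent_triples n (v \<circ> \<pi>) \<longleftrightarrow> (\<pi> i, \<pi> j, \<pi> k) \<in> concurrent_triples n v"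
  using permutes_in_image[OF assms] by (simp add: concurrent_triples_def)

lemma mem_concurrent_triples_u1:
  "(i, j, k) \<in> concurrent_triples 13 u1 \<longleftrightarrow> i < 13 \<and> j < 13 \<and> k < 13 \<and> A1_concurrent i j k"
  by (simp add: concurrent_triples_def bracket_u1_eq_0_iff)

lemma finite_concurrent_triples: "finite (concurrent_triples n v)"
proof (rule finite_subset)
  show "concurrent_triples n v \<subseteq> {..<n} \<times> {..<n} \<times> {..<n}"
    by (auto simp: concurrent_triples_def)
qed simp

lemma card_concurrent_triples_comp:
  assumes \<pi>: "\<pi> permutes {..<n}"
  shows "card (concurrent_triples n (v \<circ> \<pi>)) = card (concurrent_triples n v)"
proof (rule bij_betw_same_card)
  let ?f = "\<lambda>(i, j, k). (\<pi> i, \<pi> j, \<pi> k)"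
  have "inj ?f"
    using permutes_inj[OF \<pi>] by (auto simp: inj_def)
  then have "inj_on ?f (concurrent_triples n (v \<circ> \<pi>))"
    by (rule inj_on_subset) simp
  moreover have "?f ` concurrent_triples n (v \<circ> \<pi>) = concurrent_triples n v"
  proof (intro equalityI subsetI)
    fix t
    assume "t \<in> concurrent_triples n v"
    moreover obtain i j k where "t = (\<pi> (inv \<pi> i), \<pi> (inv \<pi> j), \<pi> (inv \<pi> k))"
      using permutes_inverses(1)[OF \<pi>] by (cases t) auto
    ultimately show "t \<in> ?f ` concurrent_triples n (v \<circ> \<pi>)"
      using mem_concurrent_triples_comp[OF \<pi>] by (metis (no_types, lifting) case_prod_conv image_eqI)
  qed (auto simp: mem_concurrent_triples_comp[OF \<pi>])
  ultimately show "bij_betw ?f (concurrent_triples n (v \<circ> \<pi>)) (concurrent_triples n v)"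
    by (simp add: bij_betw_def)
qed

lemma concurrent_triples_comp_eq_if_subset:
  assumes "\<pi>\<^sub>0 permutes {..<n}" "\<pi> permutes {..<n}"
    and "concurrent_triples n (v \<circ> \<pi>\<^sub>0) = T" "T \<subseteq> concurrent_triples n (v \<circ> \<pi>)"
  shows "concurrent_triples n (v \<circ> \<pi>) = T"
proof -
  have "card (concurrent_triples n (v \<circ> \<pi>)) = card (concurrent_triples n v)"
    by (rule card_concurrent_triples_comp[OF assms(2)])
  also have "\<dots> = card T"
    unfolding assms(3)[symmetric] by (rule card_concurrent_triples_comp[OF assms(1), symmetric])
  finally have "card (concurrent_triples n (v \<circ> \<pi>)) = card T" .
  with assms(4) show ?thesis
    by (metis card_subset_eq finite_concurrent_triples)
qed

lemma A1_relabelling_unique: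
  assumes \<pi>\<^sub>1: "\<pi>\<^sub>1 permutes {..<13}" and \<pi>\<^sub>2: "\<pi>\<^sub>2 permutes {..<13}"
    and "concurrent_triples 13 (v \<circ> \<pi>\<^sub>1) = concurrent_triples 13 u1"
    and "concurrent_triples 13 (v \<circ> \<pi>\<^sub>2) = concurrent_triples 13 u1"
  shows "\<pi>\<^sub>1 = \<pi>\<^sub>2"
proof -
  define \<rho> where "\<rho> = inv \<pi>\<^sub>1 \<circ> \<pi>\<^sub>2"
  have \<rho>: "\<rho> permutes {..<13}"
    unfolding \<rho>_def using \<pi>\<^sub>1 \<pi>\<^sub>2 by (simp add: permutes_compose permutes_inv)
  have \<pi>\<^sub>1_\<rho>: "\<pi>\<^sub>1 (\<rho> i) = \<pi>\<^sub>2 i" for i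
    using permutes_inverses(1)[OF \<pi>\<^sub>1] by (simp add: \<rho>_def)
  have "A1_concurrent (\<rho> i) (\<rho> j) (\<rho> k) = A1_concurrent i j k"
    if "i < 13" "j < 13" "k < 13" for i j k
  proof -
    have "A1_concurrent (\<rho> i) (\<rho> j) (\<rho> k) \<longleftrightarrow> (\<rho> i, \<rho> j, \<rho> k) \<in> concurrent_triples 13 u1"
      using permutes_in_image[OF \<rho>] that by (simp add: mem_concurrent_triples_u1)
    also have "\<dots> \<longleftrightarrow> (i, j, k) \<in> concurrent_triples 13 u1"
      using assms(3,4) mem_concurrent_triples_comp[OF \<pi>\<^sub>1] mem_concurrent_triples_comp[OF \<pi>\<^sub>2]
      by (metis \<pi>\<^sub>1_\<rho>)
    also have "\<dots> \<longleftrightarrow> A1_concurrent i j k"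
      using that by (simp add: mem_concurrent_triples_u1)
    finally show ?thesis .
  qed
  then have "\<rho> = id"
    by (rule A1_automorphism_trivial[OF \<rho>])
  with \<pi>\<^sub>1_\<rho> show ?thesis
    by auto
qed

section \<open>The moduli space falls apart\<close>

lemma not_connected_component_of_quotient:
  fixes X :: "'a topology" and q :: "'a \<Rightarrow> 'b"
  assumes cover: "topspace X = A \<union> B" and disjoint: "A \<inter> B = {}"
    and closed: "closedin X A" "closedin X B"
    and saturated: "\<And>x y. x \<in> A \<Longrightarrow> y \<in> topspace X \<Longrightarrow> q y = q x \<Longrightarrow> y \<in> A"
    and "a \<in> A" "b \<in> B"
  shows "\<not> connected_component_of
           (topology (\<lambda>U. U \<subseteq> q ` topspace X \<and> openin X {x \<in> topspace X. q x \<in> U})) (q a) (q b)"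
proof
  define P where "P = (\<lambda>U. U \<subseteq> q ` topspace X \<and> openin X {x \<in> topspace X. q x \<in> U})"
  have "istopology P"
    unfolding istopology_def
  proof (intro conjI allI impI)
    fix S T
    assume "P S" "P T"
    then have "S \<inter> T \<subseteq> q ` topspace X"
      "openin X ({x \<in> topspace X. q x \<in> S} \<inter> {x \<in> topspace X. q x \<in> T})"
      unfolding P_def by (blast, simp add: openin_Int)
    moreover have "{x \<in> topspace X. q x \<in> S \<inter> T}
        = {x \<in> topspace X. q x \<in> S} \<inter> {x \<in> topspace X. q x \<in> T}"
      by blast
    ultimately show "P (S \<inter> T)"
      unfolding P_def by simp
  next
    fix K
    assume K: "\<forall>U\<in>K. P U"
    have "{x \<in> topspace X. q x \<in> \<Union>K} = \<Union>((\<lambda>U. {x \<in> topspace X. q x \<in> U}) ` K)"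
      by blast
    moreover have "openin X (\<Union>((\<lambda>U. {x \<in> topspace X. q x \<in> U}) ` K))"
      using K unfolding P_def by blast
    moreover have "\<Union>K \<subseteq> q ` topspace X"
      using K unfolding P_def by blast
    ultimately show "P (\<Union>K)"
      unfolding P_def by simp
  qed
  then have openin_P: "openin (topology P) = P"
    by simp
  have in_A: "y \<in> A" if "x \<in> A" "y \<in> topspace X" "q y = q x" for x y
    using saturated that .
  have not_in_A: "y \<notin> A" if "x \<in> B" "y \<in> topspace X" "q y = q x" for x y
    using in_A[of y x] that cover disjoint by auto
  have "{x \<in> topspace X. q x \<in> q ` A} = A" "{x \<in> topspace X. q x \<in> q ` B} = B"
    using in_A not_in_A cover by fastforce+
  moreover have "{x \<in> topspace X. q x \<in> q ` topspace X} = topspace X"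
    by blast
  moreover have "openin X A" "openin X B"
    using openin_diff[OF openin_topspace closed(2)] openin_diff[OF openin_topspace closed(1)]
      cover disjoint by (simp_all add: Un_Diff Diff_triv Int_commute)
  ultimately have "P (q ` A)" "P (q ` B)" "P (q ` topspace X)"
    unfolding P_def using cover by auto
  have topspace_P: "topspace (topology P) = q ` topspace X"
  proof
    show "topspace (topology P) \<subseteq> q ` topspace X"
      unfolding topspace_def[of "topology P"] openin_P by (auto simp: P_def)
    show "q ` topspace X \<subseteq> topspace (topology P)"
      using \<open>P (q ` topspace X)\<close> unfolding topspace_def[of "topology P"] openin_P by blast
  qed
  have "q x \<noteq> q y" if "x \<in> A" "y \<in> B" for x y
    using not_in_A[of y x] that cover by auto
  then have disjoint_images: "q ` A \<inter> q ` B = {}"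
    by blast
  then have "topspace (topology P) - q ` A = q ` B"
    unfolding topspace_P cover by blast
  then have clopen: "openin (topology P) (q ` A)" "closedin (topology P) (q ` A)"
    using \<open>P (q ` A)\<close> \<open>P (q ` B)\<close> unfolding closedin_def openin_P topspace_P cover by auto
  assume "connected_component_of (topology P) (q a) (q b)"
  then obtain C where "connectedin (topology P) C" "q a \<in> C" "q b \<in> C"
    unfolding connected_component_of_def by blast
  with clopen have "C \<subseteq> q ` A"
    using connectedin_clopen_cases \<open>a \<in> A\<close> by (metis disjnt_iff imageI)
  with \<open>q b \<in> C\<close> \<open>b \<in> B\<close> disjoint_images show False
    by blast
qed

lemma mem_pgl_orbit_self: "A \<in> pgl_orbit A"
proof -
  have "(\<lambda>L. (\<lambda>p. (mat 1 :: complex^3^3) *v p) ` L) ` A = A" "invertible (mat 1 :: complex^3^3)"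
    by (simp_all add: invertible_def)
  then show ?thesis
    unfolding pgl_orbit_def by blast
qed

definition index13 :: "nat \<Rightarrow> 13" where
  "index13 = (SOME h. bij_betw h {..<13} UNIV)"

definition seq_of_tuple :: "cvec^13 \<Rightarrow> nat \<Rightarrow> cvec" where
  "seq_of_tuple l k = l $ index13 k"

definition tuple_of_seq :: "(nat \<Rightarrow> cvec) \<Rightarrow> cvec^13" where
  "tuple_of_seq u = (\<chi> i. u (the_inv_into {..<13} index13 i))"

lemma bij_index13: "bij_betw index13 {..<13} UNIV"
proof -
  obtain h where "bij_betw h {0..<card (UNIV :: 13 set)} (UNIV :: 13 set)"
    using ex_bij_betw_nat_finite[of "UNIV :: 13 set"] by auto
  then have "bij_betw h {..<13} (UNIV :: 13 set)"
    by (simp add: atLeast0LessThan)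
  then show ?thesis
    unfolding index13_def by (rule someI[where P = "\<lambda>h. bij_betw h {..<13} (UNIV :: 13 set)"])
qed

lemma seq_of_tuple_of_seq: "k < 13 \<Longrightarrow> seq_of_tuple (tuple_of_seq u) k = u k"
  using the_inv_into_f_f[of index13 "{..<13}" k] bij_index13
  by (simp add: seq_of_tuple_def tuple_of_seq_def bij_betw_def)

lemma arr_of_eq_image: "arr_of l = (\<lambda>k. line_of (seq_of_tuple l k)) ` {..<13}"
proof -
  have "range (\<lambda>i. line_of (l $ i)) = (\<lambda>i. line_of (l $ i)) ` (index13 ` {..<13})"
    using bij_index13 by (simp add: bij_betw_def)
  then show ?thesis
    by (simp add: arr_of_def seq_of_tuple_def image_comp comp_def)
qed

lemma arr_of_tuple_of_seq: "arr_of (tuple_of_seq u) = (\<lambda>k. line_of (u k)) ` {..<13}"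
  unfolding arr_of_eq_image by (rule image_cong) (simp_all add: seq_of_tuple_of_seq)

lemma labelled_arrangement_seq_of_tuple:
  assumes "l \<in> realizations TYPE(13) A0"
  shows "labelled_arrangement (seq_of_tuple l) {..<13}"
proof
  show "seq_of_tuple l k \<noteq> 0" for k
    using assms by (simp add: realizations_def seq_of_tuple_def)
  have "inj (\<lambda>i. line_of (l $ i))"
    using assms by (simp add: realizations_def)
  moreover have "inj_on index13 {..<13}"
    using bij_index13 by (simp add: bij_betw_def)
  ultimately show "inj_on (\<lambda>k. line_of (seq_of_tuple l k)) {..<13}"
    unfolding seq_of_tuple_def by (metis (no_types, lifting) inj_on_def injD)
qed simp

lemma tuple_of_seq_in_realizations:
  assumes "labelled_arrangement u {..<13}" and "lattice_iso A0 ((\<lambda>k. line_of (u k)) ` {..<13})"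
  shows "tuple_of_seq u \<in> realizations TYPE(13) A0"
proof -
  interpret U: labelled_arrangement u "{..<13}"
    by fact
  have index: "the_inv_into {..<13} index13 i < 13" for i
    using bij_betwE[OF bij_betw_the_inv_into[OF bij_index13]] by auto
  have "inj (\<lambda>i. line_of (tuple_of_seq u $ i))"
  proof (rule injI)
    fix i i'
    assume "line_of (tuple_of_seq u $ i) = line_of (tuple_of_seq u $ i')"
    then have "the_inv_into {..<13} index13 i = the_inv_into {..<13} index13 i'"
      using inj_onD[OF U.inj_lines] index by (simp add: tuple_of_seq_def)
    then show "i = i'"
      using bij_betw_the_inv_into[OF bij_index13] by (metis UNIV_I bij_betw_def inj_on_def)
  qed
  moreover have "lattice_iso A0 (arr_of (tuple_of_seq u))"
    using assms(2) by (simp add: arr_of_tuple_of_seq)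
  moreover have "tuple_of_seq u $ i \<noteq> 0" for i
    using U.nonzero index by (simp add: tuple_of_seq_def)
  ultimately show ?thesis
    by (simp add: realizations_def)
qed

lemma realization_relabelling:
  assumes "l \<in> realizations TYPE(13) arr1"
  obtains \<pi> where "\<pi> permutes {..<13}"
    "concurrent_triples 13 (seq_of_tuple l \<circ> \<pi>) = concurrent_triples 13 u1"
proof -
  have "lattice_iso ((\<lambda>k. line_of (u1 k)) ` {..<13}) ((\<lambda>k. line_of (seq_of_tuple l k)) ` {..<13})"
    using assms by (simp add: realizations_def arr1_def arr_of_eq_image)
  then obtain \<pi> where \<pi>: "bij_betw \<pi> {..<13} {..<13}"
    and conc: "\<And>i j k. i \<in> {..<13} \<Longrightarrow> j \<in> {..<13} \<Longrightarrow> k \<in> {..<13} \<Longrightarrow>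
      bracket (u1 i) (u1 j) (u1 k) = 0 \<longleftrightarrow>
      bracket (seq_of_tuple l (\<pi> i)) (seq_of_tuple l (\<pi> j)) (seq_of_tuple l (\<pi> k)) = 0"
    by (rule lattice_iso_imp_concurrency_preserving[OF labelled_arrangement_u1
          labelled_arrangement_seq_of_tuple[OF assms]]) blast
  have "concurrent_triples 13 (seq_of_tuple l \<circ> restrict_id \<pi> {..<13}) = concurrent_triples 13 u1"
    using conc by (auto simp: concurrent_triples_def)
  with permutes_restrict_id[OF \<pi>] show ?thesis
    using that by blast
qed

text \<open>Containing the concurrent triples of L1, ..., L13, rather than having exactly these,
  is a closed condition; on realizations it amounts to the same.\<close>

definition realizations_with :: "((nat \<Rightarrow> cvec) \<Rightarrow> complex) \<Rightarrow> (cvec^13) set" where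
  "realizations_with Q = {l \<in> realizations TYPE(13) arr1. \<exists>\<pi>. \<pi> permutes {..<13} \<and>
     concurrent_triples 13 u1 \<subseteq> concurrent_triples 13 (seq_of_tuple l \<circ> \<pi>) \<and>
     Q (seq_of_tuple l \<circ> \<pi>) = 0}"

lemma mem_realizations_with_iff:
  assumes l: "l \<in> realizations TYPE(13) arr1" and \<pi>: "\<pi> permutes {..<13}"
    and conc: "concurrent_triples 13 (seq_of_tuple l \<circ> \<pi>) = concurrent_triples 13 u1"
  shows "l \<in> realizations_with Q \<longleftrightarrow> Q (seq_of_tuple l \<circ> \<pi>) = 0"
proof
  assume "l \<in> realizations_with Q"
  then obtain \<pi>' where \<pi>': "\<pi>' permutes {..<13}"
    "concurrent_triples 13 u1 \<subseteq> concurrent_triples 13 (seq_of_tuple l \<circ> \<pi>')"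
    "Q (seq_of_tuple l \<circ> \<pi>') = 0"
    by (auto simp: realizations_with_def)
  have "concurrent_triples 13 (seq_of_tuple l \<circ> \<pi>') = concurrent_triples 13 u1"
    by (rule concurrent_triples_comp_eq_if_subset[OF \<pi> \<pi>'(1) conc \<pi>'(2)])
  with \<pi> \<pi>'(1) conc have "\<pi> = \<pi>'"
    by (rule A1_relabelling_unique)
  with \<pi>'(3) show "Q (seq_of_tuple l \<circ> \<pi>) = 0"
    by simp
next
  assume "Q (seq_of_tuple l \<circ> \<pi>) = 0"
  with l \<pi> conc show "l \<in> realizations_with Q"
    unfolding realizations_with_def by blast
qed

lemma mem_realizations_with_Q1_iff:
  assumes l: "l \<in> realizations TYPE(13) arr1"
  shows "l \<in> realizations_with Q1 \<longleftrightarrow> l \<notin> realizations_with Q2"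
proof -
  obtain \<pi> where \<pi>: "\<pi> permutes {..<13}"
    and conc: "concurrent_triples 13 (seq_of_tuple l \<circ> \<pi>) = concurrent_triples 13 u1"
    by (rule realization_relabelling[OF l])
  have "(seq_of_tuple l \<circ> \<pi>) k \<noteq> 0" for k
    using l by (simp add: realizations_def seq_of_tuple_def)
  then have "Q1 (seq_of_tuple l \<circ> \<pi>) = 0 \<longleftrightarrow> Q2 (seq_of_tuple l \<circ> \<pi>) \<noteq> 0"
    using Q1_eq_0_iff_Q2_neq_0[OF conc] by blast
  then show ?thesis
    using mem_realizations_with_iff[OF l \<pi> conc] by simp
qed

lemma same_orbit_imp_proj_equivalent:
  assumes l: "l \<in> realizations TYPE(13) A0" and l': "l' \<in> realizations TYPE(13) A0"
    and orbit: "pgl_orbit (arr_of l') = pgl_orbit (arr_of l)"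
  obtains \<rho> where "\<rho> permutes {..<13}" "proj_equivalent 13 (seq_of_tuple l) (seq_of_tuple l' \<circ> \<rho>)"
proof -
  interpret L: labelled_arrangement "seq_of_tuple l" "{..<13}"
    by (rule labelled_arrangement_seq_of_tuple[OF l])
  interpret L': labelled_arrangement "seq_of_tuple l'" "{..<13}"
    by (rule labelled_arrangement_seq_of_tuple[OF l'])
  obtain g :: "complex^3^3" where g: "invertible g"
    and arr_l': "arr_of l' = (\<lambda>L. (\<lambda>p. g *v p) ` L) ` arr_of l"
    using mem_pgl_orbit_self[of "arr_of l'"] orbit unfolding pgl_orbit_def by auto
  obtain B where B: "B ** g = mat 1" "g ** B = mat 1"
    using g unfolding invertible_def by blast
  define h where "h = transpose B"
  have "det B * det g = 1"
    using B(1) det_mul[of B g] by simp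
  then have "det h \<noteq> 0"
    by (auto simp: h_def det_transpose)
  have image_line: "(\<lambda>p. g *v p) ` line_of (seq_of_tuple l k) = line_of (h *v seq_of_tuple l k)" for k
    unfolding h_def by (rule image_line_of_matrix[OF B])
  have "\<exists>m. m < 13 \<and> line_of (h *v seq_of_tuple l k) = line_of (seq_of_tuple l' m)" if "k < 13" for k
  proof -
    have "line_of (seq_of_tuple l k) \<in> arr_of l"
      using that by (simp add: arr_of_eq_image)
    then have "(\<lambda>p. g *v p) ` line_of (seq_of_tuple l k) \<in> arr_of l'"
      unfolding arr_l' by (rule imageI)
    then show ?thesis
      unfolding image_line arr_of_eq_image by blast
  qed
  then obtain \<rho>\<^sub>0 where \<rho>\<^sub>0: "\<And>k. k < 13 \<Longrightarrow> \<rho>\<^sub>0 k < 13"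
    "\<And>k. k < 13 \<Longrightarrow> line_of (h *v seq_of_tuple l k) = line_of (seq_of_tuple l' (\<rho>\<^sub>0 k))"
    by metis
  have "inj_on \<rho>\<^sub>0 {..<13}"
  proof (rule inj_onI)
    fix i j
    assume ij: "i \<in> {..<13}" "j \<in> {..<13}" "\<rho>\<^sub>0 i = \<rho>\<^sub>0 j"
    then have "(\<lambda>p. g *v p) ` line_of (seq_of_tuple l i) = (\<lambda>p. g *v p) ` line_of (seq_of_tuple l j)"
      using \<rho>\<^sub>0(2) image_line by simp
    moreover have "inj (\<lambda>p. g *v p)"
      using B(1) by (metis injI matrix_vector_mul_assoc matrix_vector_mul_lid)
    ultimately have "line_of (seq_of_tuple l i) = line_of (seq_of_tuple l j)"
      by (simp add: inj_image_eq_iff)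
    with ij show "i = j"
      using inj_onD[OF L.inj_lines] by blast
  qed
  with \<rho>\<^sub>0(1) have "bij_betw \<rho>\<^sub>0 {..<13} {..<13}"
    by (simp add: bij_betw_def endo_inj_surj image_subset_iff)
  then have \<rho>: "restrict_id \<rho>\<^sub>0 {..<13} permutes {..<13}"
    by (rule permutes_restrict_id)
  have "\<exists>c. c \<noteq> 0 \<and> seq_of_tuple l' (\<rho>\<^sub>0 k) = c *s (h *v seq_of_tuple l k)" if "k < 13" for k
    using line_of_eq_imp_proportional[OF \<rho>\<^sub>0(2)[OF that]] \<open>det h \<noteq> 0\<close> L.nonzero L'.nonzero that
      \<rho>\<^sub>0(1) matrix_vector_mult_neq_0[OF \<open>det h \<noteq> 0\<close>] by simp
  then obtain c where "\<And>k. k < 13 \<Longrightarrow> c k \<noteq> 0 \<and> seq_of_tuple l' (\<rho>\<^sub>0 k) = c k *s (h *v seq_of_tuple l k)"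
    by metis
  with \<open>det h \<noteq> 0\<close> have "proj_equivalent 13 (seq_of_tuple l) (seq_of_tuple l' \<circ> restrict_id \<rho>\<^sub>0 {..<13})"
    unfolding proj_equivalent_def by (intro exI[of _ h] exI[of _ c]) simp
  with \<rho> show ?thesis
    by (rule that)
qed

lemma realizations_with_saturated:
  assumes Q: "\<And>v w. proj_equivalent 13 v w \<Longrightarrow> Q w = 0 \<longleftrightarrow> Q v = 0"
    and l: "l \<in> realizations_with Q" and l': "l' \<in> realizations TYPE(13) arr1"
    and orbit: "pgl_orbit (arr_of l') = pgl_orbit (arr_of l)"
  shows "l' \<in> realizations_with Q"
proof -
  have l_real: "l \<in> realizations TYPE(13) arr1"
    using l by (simp add: realizations_with_def)
  obtain \<pi> where \<pi>: "\<pi> permutes {..<13}"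
    and conc: "concurrent_triples 13 (seq_of_tuple l \<circ> \<pi>) = concurrent_triples 13 u1"
    by (rule realization_relabelling[OF l_real])
  obtain \<rho> where \<rho>: "\<rho> permutes {..<13}"
    and equiv: "proj_equivalent 13 (seq_of_tuple l) (seq_of_tuple l' \<circ> \<rho>)"
    by (rule same_orbit_imp_proj_equivalent[OF l_real l' orbit])
  have equiv_\<pi>: "proj_equivalent 13 (seq_of_tuple l \<circ> \<pi>) (seq_of_tuple l' \<circ> (\<rho> \<circ> \<pi>))"
    using proj_equivalent_comp[OF equiv \<pi>] by (simp add: comp_assoc)
  have "concurrent_triples 13 (seq_of_tuple l' \<circ> (\<rho> \<circ> \<pi>)) = concurrent_triples 13 u1"
    using concurrent_triples_proj_equivalent[OF equiv_\<pi>] conc by simp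
  moreover have "Q (seq_of_tuple l' \<circ> (\<rho> \<circ> \<pi>)) = 0"
    using Q[OF equiv_\<pi>] l mem_realizations_with_iff[OF l_real \<pi> conc] by simp
  ultimately show ?thesis
    using mem_realizations_with_iff[OF l' permutes_compose[OF \<pi> \<rho>]] by simp
qed

lemma closedin_realizations_with:
  assumes cont: "\<And>\<pi>. continuous_on UNIV (\<lambda>l. Q (seq_of_tuple l \<circ> \<pi>))"
  shows "closedin (top_of_set (realizations TYPE(13) arr1)) (realizations_with Q)"
proof -
  have closed_incidences:
    "closed {l. concurrent_triples 13 u1 \<subseteq> concurrent_triples 13 (seq_of_tuple l \<circ> \<pi>)}" for \<pi>
  proof -
    have "closed {l. t \<in> concurrent_triples 13 (seq_of_tuple l \<circ> \<pi>)}"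
      if "t \<in> concurrent_triples 13 u1" for t
    proof -
      obtain i j k where t: "t = (i, j, k)"
        by (cases t) blast
      with that have "i < 13" "j < 13" "k < 13"
        by (simp_all add: concurrent_triples_def)
      with t have "{l. t \<in> concurrent_triples 13 (seq_of_tuple l \<circ> \<pi>)}
          = {l. bracket (seq_of_tuple l (\<pi> i)) (seq_of_tuple l (\<pi> j)) (seq_of_tuple l (\<pi> k)) = 0}"
        by (simp add: concurrent_triples_def)
      moreover have "continuous_on UNIV
          (\<lambda>l. bracket (seq_of_tuple l (\<pi> i)) (seq_of_tuple l (\<pi> j)) (seq_of_tuple l (\<pi> k)))"
        unfolding bracket_expand seq_of_tuple_def by (intro continuous_intros)
      ultimately show ?thesis
        using closed_Collect_eq[OF _ continuous_on_const] by simp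
    qed
    moreover have "{l. concurrent_triples 13 u1 \<subseteq> concurrent_triples 13 (seq_of_tuple l \<circ> \<pi>)}
        = (\<Inter>t\<in>concurrent_triples 13 u1. {l. t \<in> concurrent_triples 13 (seq_of_tuple l \<circ> \<pi>)})"
      by blast
    ultimately show ?thesis
      by (simp add: closed_INT)
  qed
  have "realizations_with Q = realizations TYPE(13) arr1 \<inter>
      (\<Union>\<pi>\<in>{\<pi>. \<pi> permutes {..<13}}.
         {l. concurrent_triples 13 u1 \<subseteq> concurrent_triples 13 (seq_of_tuple l \<circ> \<pi>)}
         \<inter> {l. Q (seq_of_tuple l \<circ> \<pi>) = 0})"
    by (auto simp: realizations_with_def)
  moreover have "closed (\<Union>\<pi>\<in>{\<pi>. \<pi> permutes {..<13::nat}}.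
      {l. concurrent_triples 13 u1 \<subseteq> concurrent_triples 13 (seq_of_tuple l \<circ> \<pi>)}
      \<inter> {l. Q (seq_of_tuple l \<circ> \<pi>) = 0})"
    using finite_permutations[of "{..<13::nat}"] closed_incidences
      closed_Collect_eq[OF cont continuous_on_const]
    by (intro closed_UN ballI closed_Int) simp_all
  ultimately show ?thesis
    by (simp add: closedin_closed_Int)
qed

lemma concurrent_triples_tuple_of_seq:
  "concurrent_triples 13 (seq_of_tuple (tuple_of_seq u)) = concurrent_triples 13 u"
  by (auto simp: concurrent_triples_def seq_of_tuple_of_seq)

lemma tuple_of_seq_u1_in_realizations_with: "tuple_of_seq u1 \<in> realizations_with Q1"
proof -
  have "lattice_iso arr1 arr1"
    unfolding arr1_def
    by (rule lattice_iso_if_concurrency_preserving[OF labelled_arrangement_u1 labelled_arrangement_u1])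
      simp
  then have real: "tuple_of_seq u1 \<in> realizations TYPE(13) arr1"
    unfolding arr1_def by (rule tuple_of_seq_in_realizations[OF labelled_arrangement_u1])
  have "Q1 (seq_of_tuple (tuple_of_seq u1)) = Q1 u1"
    by (simp add: Q1_def seq_of_tuple_of_seq)
  with mem_realizations_with_iff[OF real permutes_id] Q1_u1 show ?thesis
    by (simp add: concurrent_triples_tuple_of_seq)
qed

lemma tuple_of_seq_u2_in_realizations_with: "tuple_of_seq u2 \<in> realizations_with Q2"
proof -
  have real: "tuple_of_seq u2 \<in> realizations TYPE(13) arr1"
    using lattice_iso_arr1_arr2 unfolding arr2_def
    by (rule tuple_of_seq_in_realizations[OF labelled_arrangement_u2])
  have "concurrent_triples 13 u2 = concurrent_triples 13 u1"
    using bracket_u1_eq_0_iff_bracket_u2_eq_0 by (auto simp: concurrent_triples_def)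
  moreover have "Q2 (seq_of_tuple (tuple_of_seq u2)) = Q2 u2"
    by (simp add: Q2_def seq_of_tuple_of_seq)
  ultimately show ?thesis
    using mem_realizations_with_iff[OF real permutes_id] Q2_u2
    by (simp add: concurrent_triples_tuple_of_seq)
qed

lemma not_connected_component_of_arr1_arr2:
  "\<not> connected_component_of (moduli_top TYPE(13) arr1) (pgl_orbit arr1) (pgl_orbit arr2)"
proof -
  let ?R = "realizations TYPE(13) arr1" and ?q = "\<lambda>l. pgl_orbit (arr_of l)"
  have "realizations_with Q \<subseteq> ?R" for Q
    by (auto simp: realizations_with_def)
  then have cover: "?R = realizations_with Q1 \<union> realizations_with Q2"
    and disjoint: "realizations_with Q1 \<inter> realizations_with Q2 = {}"
    using mem_realizations_with_Q1_iff by blast+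
  have "continuous_on UNIV (\<lambda>l. Q1 (seq_of_tuple l \<circ> \<pi>))" "continuous_on UNIV (\<lambda>l. Q2 (seq_of_tuple l \<circ> \<pi>))"
    for \<pi>
    unfolding Q1_def Q2_def bracket_expand seq_of_tuple_def by (auto intro!: continuous_intros)
  then have "closedin (top_of_set ?R) (realizations_with Q1)" "closedin (top_of_set ?R) (realizations_with Q2)"
    by (simp_all add: closedin_realizations_with)
  moreover have "y \<in> realizations_with Q1"
    if "x \<in> realizations_with Q1" "y \<in> ?R" "?q y = ?q x" for x y
    using realizations_with_saturated Q1_Q2_proj_equivalent(1) that by blast
  ultimately have "\<not> connected_component_of
      (topology (\<lambda>U. U \<subseteq> ?q ` topspace (top_of_set ?R)
        \<and> openin (top_of_set ?R) {x \<in> topspace (top_of_set ?R). ?q x \<in> U}))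
      (?q (tuple_of_seq u1)) (?q (tuple_of_seq u2))"
    using cover disjoint tuple_of_seq_u1_in_realizations_with tuple_of_seq_u2_in_realizations_with
    by (intro not_connected_component_of_quotient) simp_all
  then show ?thesis
    by (simp add: moduli_top_def arr_of_tuple_of_seq flip: arr1_def arr2_def)
qed

theorem theorem3p5:
  fixes A :: "cvec set set"
  defines "A \<equiv> {lin 0 2 (-1), lin 1 (-1) 0, lin 1 1 (-1), lin 1 0 0, lin 2 (-2) 1,
                 lin 1 0 (-1), lin 2 6 (-5), lin 0 1 0, lin 0 1 (-1), lin 0 0 1}"
  shows "rational_pair TYPE(13)
           (A \<union> {lin 3 2 (-3), lin 0 5 (-3), lin 6 (-2) (-3)})
           (A \<union> {lin 1 (-3) (-1), lin 0 2 1, lin 4 6 (-13)})"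
proof -
  interpret A1: labelled_arrangement u1 "{..<13}"
    by (rule labelled_arrangement_u1)
  interpret A2: labelled_arrangement u2 "{..<13}"
    by (rule labelled_arrangement_u2)
  have "arrangement arr1" "arrangement arr2" "card arr1 = 13"
    using A1.arrangement_lines A2.arrangement_lines A1.card_lines by (simp_all add: arr1_def arr2_def)
  moreover have "rational_arr arr1" "rational_arr arr2"
    unfolding arr1_def arr2_def
    using labelled_arrangement_u1 labelled_arrangement_u2 by (simp_all add: rational_arr_seq_of_int)
  ultimately show ?thesis
    unfolding A_def arr1_eq arr2_eq rational_pair_def is_pair_def
    using lattice_iso_arr1_arr2 not_connected_component_of_arr1_arr2 by simp
qed

end
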